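(* Let $E$ be a real-valued function on $k$-partite pure states that is fully additive, monotone on average under LOCC, and satisfies $E(\mathrm{GHZ})=1$. Then for all $k$-partite state vectors $\varphi,\psi$ and all $p\in[0,1]$, \[ E(\sqrt{p}\,\varphi\oplus\sqrt{1-p}\,\psi)\ge pE(\varphi)+(1-p)E(\psi)+h(p). \]
   Context: Logs base 2; $h(p)=-p\log p-(1-p)\log(1-p)$. For $\varphi\in\mathcal{H}_1\otimes\cdots\otimes\mathcal{H}_k$ and $\psi\in\mathcal{K}_1\otimes\cdots\otimes\mathcal{K}_k$, the direct sum $a\varphi\oplus b\psi$ is the vector $a\varphi+b\psi$ in $(\mathcal{H}_1\oplus\mathcal{K}_1)\otimes\cdots\otimes(\mathcal{H}_k\oplus\mathcal{K}_k)$, which contains $\mathcal{H}$ and $\mathcal{K}$ as orthogonal subspaces (a superposition of locally orthogonal vectors). We write $E(\varphi)$ for $E(|\varphi\rangle\langle\varphi|)$; $E$ is defined on pure states of arbitrary finite local dimensions. $\mathrm{GHZ}$ has vector $2^{-1/2}(|0\ldots0\rangle+|1\ldots1\rangle)$. Fully additive: $E(\varphi\otimes\psi)=E(\varphi)+E(\psi)$ (tensor factors grouped per party). Monotone on average under LOCC: whenever an LOCC channel maps $|\varphi\rangle\langle\varphi|$ to $\sum_{x\in\mathcal{X}}P(x)|x\rangle\langle x|\otimes|\varphi_x\rangle\langle\varphi_x|$ (finite $\mathcal{X}$, classical flag $x$ known to all parties), then $E(\varphi)\ge\sum_xP(x)E(\varphi_x)$. *)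

theory Defs
  imports Complex_Main
begin

text \<open>A k-partite system with local dimensions d_1..d_k is given by the
list d (length k). Basis vectors are indexed by multi-indices i (lists of length k
with i!j < d!j). A vector is a function from multi-indices to complex numbers that
vanishes outside the basis; an operator is a complex matrix indexed by pairs of
multi-indices.\<close>

type_synonym mvec = "nat list \<Rightarrow> complex"
type_synonym mop = "nat list \<Rightarrow> nat list \<Rightarrow> complex"

definition basis :: "nat list \<Rightarrow> nat list set" where
  "basis d = {i. length i = length d \<and> (\<forall>j<length d. i ! j < d ! j)}"

definition is_state :: "nat list \<Rightarrow> mvec \<Rightarrow> bool" where
  "is_state d \<phi> \<longleftrightarrow> (\<forall>i. i \<notin> basis d \<longrightarrow> \<phi> i = 0) \<and>
     (\<Sum>i\<in>basis d. (cmod (\<phi> i))\<^sup>2) = 1"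

definition proj :: "mvec \<Rightarrow> mop" where
  "proj \<phi> = (\<lambda>i i'. \<phi> i * cnj (\<phi> i'))"

text \<open>Tensor product with factors grouped per party: the local space of party j is
C^(d_j) (x) C^(d'_j), basis index a*d'_j + b.\<close>
definition tensor_dims :: "nat list \<Rightarrow> nat list \<Rightarrow> nat list" where
  "tensor_dims d d' = map2 (*) d d'"

definition tensor :: "nat list \<Rightarrow> nat list \<Rightarrow> mvec \<Rightarrow> mvec \<Rightarrow> mvec" where
  "tensor d d' \<phi> \<psi> = (\<lambda>i. if i \<in> basis (tensor_dims d d')
      then \<phi> (map2 (div) i d') * \<psi> (map2 (mod) i d') else 0)"

text \<open>Direct sum: the local space of party j is C^(d_j) (+) C^(d'_j), the first
summand occupying indices < d_j.  dsum d d' a phi b psi is the vector a phi + b psi.\<close>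
definition dsum_dims :: "nat list \<Rightarrow> nat list \<Rightarrow> nat list" where
  "dsum_dims d d' = map2 (+) d d'"

definition dsum :: "nat list \<Rightarrow> nat list \<Rightarrow> complex \<Rightarrow> mvec \<Rightarrow> complex \<Rightarrow> mvec \<Rightarrow> mvec" where
  "dsum d d' a \<phi> b \<psi> = (\<lambda>i. if i \<in> basis (dsum_dims d d') then
      (if (\<forall>j<length d. i ! j < d ! j) then a * \<phi> i
       else if (\<forall>j<length d. d ! j \<le> i ! j) then b * \<psi> (map2 (-) i d)
       else 0)
    else 0)"

definition ghz :: "nat \<Rightarrow> mvec" where
  "ghz k = (\<lambda>i. if i = replicate k 0 \<or> i = replicate k 1
                then complex_of_real (1 / sqrt 2) else 0)"

text \<open>Binary entropy, logs base 2 (the terms with p = 0 vanish since 0 * x = 0).\<close>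
definition h :: "real \<Rightarrow> real" where
  "h p = - p * log 2 p - (1 - p) * log 2 (1 - p)"

text \<open>Local completely positive map at party j, given by Kraus operators A r
(r < N), each an e x dj matrix (row, column), applied as (A r (x) I):
rho |-> sum_r (A r (x) I) rho (A r (x) I)^dagger.  D' are the output dimensions.\<close>
definition local_op :: "nat list \<Rightarrow> nat \<Rightarrow> nat \<Rightarrow> nat \<Rightarrow> (nat \<Rightarrow> nat \<Rightarrow> nat \<Rightarrow> complex) \<Rightarrow> mop \<Rightarrow> mop" where
  "local_op D' j dj N A \<rho> = (\<lambda>i i'. if i \<in> basis D' \<and> i' \<in> basis D' then
      (\<Sum>r<N. \<Sum>a<dj. \<Sum>b<dj. A r (i ! j) a * \<rho> (i[j := a]) (i'[j := b]) * cnj (A r (i' ! j) b))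
    else 0)"

text \<open>A local instrument C^dj -> C^e with outcome set M: for outcome m, Kraus operators
A m r (r < N m); trace preservation: sum over m, r of (A m r)^dagger (A m r) = I.\<close>
definition local_instrument :: "nat \<Rightarrow> nat \<Rightarrow> nat set \<Rightarrow> (nat \<Rightarrow> nat) \<Rightarrow> (nat \<Rightarrow> nat \<Rightarrow> nat \<Rightarrow> nat \<Rightarrow> complex) \<Rightarrow> bool" where
  "local_instrument dj e M N A \<longleftrightarrow> finite M \<and>
     (\<forall>a<dj. \<forall>b<dj. (\<Sum>m\<in>M. \<Sum>r<N m. \<Sum>c<e. cnj (A m r c a) * A m r c b) = (if a = b then 1 else 0))"

text \<open>Finite-round LOCC instruments. locc d d' T L: from dimensions d to dimensions d',
with (finite) set T of classical transcripts; L t is the (trace non-increasing) CP map of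
branch t.  In each round one party j performs a local instrument, whose outcome m is
broadcast; the rest of the protocol may depend on m.\<close>
inductive locc :: "nat list \<Rightarrow> nat list \<Rightarrow> nat list set \<Rightarrow> (nat list \<Rightarrow> mop \<Rightarrow> mop) \<Rightarrow> bool" where
  locc_id: "locc d d {[]} (\<lambda>_ \<rho>. \<rho>)"
| locc_step: "\<lbrakk> j < length d; local_instrument (d ! j) e M N A;
     \<And>m. m \<in> M \<Longrightarrow> locc (d[j := e]) d' (Y m) (L m) \<rbrakk> \<Longrightarrow>
   locc d d' (\<Union>m\<in>M. (\<lambda>y. m # y) ` Y m)
     (\<lambda>t \<rho>. L (hd t) (tl t) (local_op (d[j := e]) j (d ! j) (N (hd t)) (A (hd t)) \<rho>))"

end

(*
  Write Phi_p = sqrt p phi (+) sqrt (1 - p) psi and let G p be the infimum, over all states,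
  of the defect E Phi_p - p E phi - (1 - p) E psi - h p.  Measuring locally which summand is
  present and relabelling gives E Phi_p >= p E phi + (1 - p) E psi, hence G >= - h.

  Up to a local relabelling of every party, Phi_p (x) Phi_p is the superposition
  sqrt s (sqrt (p^2/s) phi phi (+) sqrt ((1-p)^2/s) psi psi) (+) sqrt (1 - s) GHZ (x) phi psi
  with s = p^2 + (1-p)^2.  Additivity, monotonicity, E GHZ = 1 and the chain rule for h turn this
  into the recursion G s + s G (p^2/s) <= 2 G p.  As h x = O(sqrt x) at both ends of [0,1] and
  s <= 1 - eps away from them, a negative lower bound g of G on [0,1] would improve to
  g (1 - eps/2); so G >= 0, which is the claim.
*)

theory Submission
  imports Defs
begin

section \<open>Multi-indices, tensor products and direct sums\<close>

lemma cnj_of_bool [simp]: "cnj (of_bool P) = of_bool P"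
  by (cases P) simp_all

lemma sum_sum_delta:
  fixes F :: "nat \<Rightarrow> nat \<Rightarrow> 'a::comm_monoid_add"
  assumes "c < n" "c' < n" and "\<And>a b. F a b \<noteq> 0 \<Longrightarrow> a = c \<and> b = c'"
  shows "(\<Sum>a<n. \<Sum>b<n. F a b) = F c c'"
proof -
  have "(\<Sum>b<n. F a b) = (if a = c then F c c' else 0)" for a
  proof -
    have "(\<Sum>b<n. F a b) = (\<Sum>b<n. if b = c' then F a b else 0)"
      using assms(3) by (intro sum.cong) auto
    then show ?thesis using assms by auto
  qed
  then show ?thesis using assms(1) by simp
qed

lemma divmod_add_mult:
  fixes u v n :: nat
  assumes "v < n"
  shows "(u * n + v) div n = u" "(u * n + v) mod n = v"
  using assms by (simp_all add: add.commute[of "u * n"])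

lemma finite_basis: "finite (basis d)"
proof (rule finite_subset)
  show "basis d \<subseteq> {xs. set xs \<subseteq> {..<sum_list d} \<and> length xs = length d}"
  proof (rule subsetI, intro CollectI conjI)
    fix i assume i: "i \<in> basis d"
    show "set i \<subseteq> {..<sum_list d}"
    proof
      fix x assume "x \<in> set i"
      then obtain j where j: "j < length d" "x = i!j" using i by (auto simp: basis_def in_set_conv_nth)
      have "d!j \<le> sum_list d" using j by (simp add: elem_le_sum_list)
      then show "x \<in> {..<sum_list d}" using i j by (auto simp: basis_def)
    qed
    show "length i = length d" using i by (simp add: basis_def)
  qed
qed (simp add: finite_lists_length_eq)

lemma is_state_dims_pos:
  assumes "is_state D \<phi>" "j < length D"
  shows "0 < D!j"
proof (rule ccontr)
  assume "\<not> 0 < D!j"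
  then have "basis D = {}" using assms(2) by (auto simp: basis_def)
  then show False using assms(1) by (simp add: is_state_def)
qed

lemma is_state_nonzero:
  assumes "is_state D \<phi>"
  shows "\<exists>i. \<phi> i \<noteq> 0"
proof (rule ccontr)
  assume "\<nexists>i. \<phi> i \<noteq> 0"
  then show False using assms by (simp add: is_state_def)
qed

lemma basis_list_update_iff:
  "j < length D \<Longrightarrow> i \<in> basis (D[j:=e]) \<longleftrightarrow>
     length i = length D \<and> i!j < e \<and> (\<forall>l<length D. l \<noteq> j \<longrightarrow> i!l < D!l)"
  by (auto simp: basis_def nth_list_update split: if_splits)

lemma length_tensor_dims [simp]: "length (tensor_dims d1 d2) = min (length d1) (length d2)"
  by (simp add: tensor_dims_def)

lemma nth_tensor_dims [simp]:
  "j < length d1 \<Longrightarrow> j < length d2 \<Longrightarrow> tensor_dims d1 d2 ! j = d1!j * d2!j"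
  by (simp add: tensor_dims_def)

lemma length_dsum_dims [simp]: "length (dsum_dims d1 d2) = min (length d1) (length d2)"
  by (simp add: dsum_dims_def)

lemma nth_dsum_dims [simp]:
  "j < length d1 \<Longrightarrow> j < length d2 \<Longrightarrow> dsum_dims d1 d2 ! j = d1!j + d2!j"
  by (simp add: dsum_dims_def)

lemma tensor_apply:
  "i \<in> basis (tensor_dims d1 d2) \<Longrightarrow>
     tensor d1 d2 \<phi>1 \<phi>2 i = \<phi>1 (map2 (div) i d2) * \<phi>2 (map2 (mod) i d2)"
  by (simp add: tensor_def)

lemma bij_betw_tensor_basis:
  assumes l: "length d1 = length d2" and pos: "\<forall>j<length d2. 0 < d2!j"
  shows "bij_betw (\<lambda>i. (map2 (div) i d2, map2 (mod) i d2))
           (basis (tensor_dims d1 d2)) (basis d1 \<times> basis d2)"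
proof (rule bij_betw_byWitness[where f' = "\<lambda>(a, b). map (\<lambda>j. a!j * d2!j + b!j) [0..<length d2]"])
  show "\<forall>i\<in>basis (tensor_dims d1 d2).
      (\<lambda>(a, b). map (\<lambda>j. a!j * d2!j + b!j) [0..<length d2]) (map2 (div) i d2, map2 (mod) i d2) = i"
    using l by (auto simp: basis_def div_mult_mod_eq intro!: nth_equalityI)
  show "\<forall>ab\<in>basis d1 \<times> basis d2. (\<lambda>i. (map2 (div) i d2, map2 (mod) i d2))
      ((\<lambda>(a, b). map (\<lambda>j. a!j * d2!j + b!j) [0..<length d2]) ab) = ab"
    using l by (auto simp: basis_def intro!: nth_equalityI)
  show "(\<lambda>i. (map2 (div) i d2, map2 (mod) i d2)) ` basis (tensor_dims d1 d2) \<subseteq> basis d1 \<times> basis d2"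
    using l pos by (auto simp: basis_def div_less_iff_less_mult mult.commute)
  have "a * n + b < m * n" if "a < m" "b < n" for a b m n :: nat
  proof -
    have "a * n + b < (a + 1) * n" using that by simp
    also have "\<dots> \<le> m * n" using that by (intro mult_right_mono) auto
    finally show ?thesis .
  qed
  then show "(\<lambda>(a, b). map (\<lambda>j. a!j * d2!j + b!j) [0..<length d2]) ` (basis d1 \<times> basis d2)
      \<subseteq> basis (tensor_dims d1 d2)"
    using l by (auto simp: basis_def)
qed

lemma tensor_state:
  assumes "length d1 = length d2" "is_state d1 \<phi>1" "is_state d2 \<phi>2"
  shows "is_state (tensor_dims d1 d2) (tensor d1 d2 \<phi>1 \<phi>2)"
proof -
  let ?f = "\<lambda>(a, b). (cmod (\<phi>1 a))\<^sup>2 * (cmod (\<phi>2 b))\<^sup>2"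
  have bij: "bij_betw (\<lambda>i. (map2 (div) i d2, map2 (mod) i d2)) (basis (tensor_dims d1 d2)) (basis d1 \<times> basis d2)"
    using assms by (intro bij_betw_tensor_basis) (auto intro: is_state_dims_pos)
  have "(\<Sum>i\<in>basis (tensor_dims d1 d2). (cmod (tensor d1 d2 \<phi>1 \<phi>2 i))\<^sup>2)
      = (\<Sum>i\<in>basis (tensor_dims d1 d2). ?f (map2 (div) i d2, map2 (mod) i d2))"
    by (simp add: tensor_apply norm_mult power_mult_distrib)
  also have "\<dots> = (\<Sum>ab\<in>basis d1 \<times> basis d2. ?f ab)"
    using sum.reindex_bij_betw[OF bij] by blast
  also have "\<dots> = (\<Sum>a\<in>basis d1. (cmod (\<phi>1 a))\<^sup>2) * (\<Sum>b\<in>basis d2. (cmod (\<phi>2 b))\<^sup>2)"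
    by (simp add: sum_product sum.cartesian_product)
  finally show ?thesis using assms by (simp add: is_state_def tensor_def)
qed

lemma dsum_apply_first:
  "i \<in> basis (dsum_dims d d') \<Longrightarrow> \<forall>j<length d. i!j < d!j \<Longrightarrow> dsum d d' a \<phi> b \<psi> i = a * \<phi> i"
  by (simp add: dsum_def)

lemma dsum_apply_second:
  "i \<in> basis (dsum_dims d d') \<Longrightarrow> \<forall>j<length d. d!j \<le> i!j \<Longrightarrow> 0 < length d \<Longrightarrow>
     dsum d d' a \<phi> b \<psi> i = b * \<psi> (map2 (-) i d)"
  unfolding dsum_def by (metis not_le)

lemma dsum_apply_mixed:
  "\<not> (\<forall>j<length d. i!j < d!j) \<Longrightarrow> \<not> (\<forall>j<length d. d!j \<le> i!j) \<Longrightarrow> dsum d d' a \<phi> b \<psi> i = 0"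
  unfolding dsum_def by (simp only: if_False if_cancel)

lemma dsum_apply_shift:
  assumes "length d = length d'" "0 < length d" "i \<in> basis d'"
  shows "dsum d d' a \<phi> b \<psi> (map2 (+) i d) = b * \<psi> i"
proof -
  have "map2 (+) i d \<in> basis (dsum_dims d d')" "map2 (-) (map2 (+) i d) d = i"
    using assms by (auto simp: basis_def intro!: nth_equalityI)
  then show ?thesis using assms by (subst dsum_apply_second) (auto simp: basis_def)
qed

lemma dsum_support:
  assumes l: "length d = length d'" and nz: "dsum d d' a \<phi> b \<psi> i \<noteq> 0"
  shows "i \<in> basis d \<union> (\<lambda>i'. map2 (+) i' d) ` basis d'"
proof -
  have i: "length i = length d" "\<forall>j<length d. i!j < d!j + d'!j"
    using nz l by (auto simp: dsum_def basis_def split: if_splits)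
  consider "\<forall>j<length d. i!j < d!j" | "\<forall>j<length d. d!j \<le> i!j"
    using nz dsum_apply_mixed by blast
  then show ?thesis
  proof cases
    case 1
    then show ?thesis using i by (simp add: basis_def)
  next
    case 2
    then have "\<forall>j<length d. i!j - d!j < d'!j" using i by (auto simp: less_diff_conv2)
    then have "map2 (-) i d \<in> basis d'" "i = map2 (+) (map2 (-) i d) d"
      using 2 i l by (auto simp: basis_def intro!: nth_equalityI)
    then show ?thesis by blast
  qed
qed

lemma dsum_state:
  assumes l: "length d = length d'" "0 < length d" and s: "is_state d \<phi>" "is_state d' \<psi>"
    and ab: "(cmod a)\<^sup>2 + (cmod b)\<^sup>2 = 1"
  shows "is_state (dsum_dims d d') (dsum d d' a \<phi> b \<psi>)"
proof -
  let ?shift = "\<lambda>i'. map2 (+) i' d"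
  let ?f = "\<lambda>i. (cmod (dsum d d' a \<phi> b \<psi> i))\<^sup>2"
  have sub: "basis d \<union> ?shift ` basis d' \<subseteq> basis (dsum_dims d d')"
    using l by (auto simp: basis_def)
  have inj: "inj_on ?shift (basis d')"
  proof (rule inj_onI)
    fix x y assume "x \<in> basis d'" "y \<in> basis d'" and eq: "?shift x = ?shift y"
    then have "length x = length d" "length y = length d" using l by (auto simp: basis_def)
    moreover have "x!j = y!j" if "j < length d" for j
      using arg_cong[OF eq, of "\<lambda>v. v!j"] that \<open>length x = length d\<close> \<open>length y = length d\<close> by simp
    ultimately show "x = y" by (auto intro: nth_equalityI)
  qed
  have disj: "basis d \<inter> ?shift ` basis d' = {}"
    using l by (force simp: basis_def)
  have zero: "?f i = 0" if "i \<notin> basis d \<union> ?shift ` basis d'" for i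
    using dsum_support[OF l(1), of a \<phi> b \<psi> i] that by auto
  have first: "?f i = (cmod a)\<^sup>2 * (cmod (\<phi> i))\<^sup>2" if "i \<in> basis d" for i
  proof -
    have "i \<in> basis (dsum_dims d d')" "\<forall>j<length d. i!j < d!j" using that sub by (auto simp: basis_def)
    then show ?thesis by (simp add: dsum_apply_first norm_mult power_mult_distrib)
  qed
  have second: "?f (?shift i) = (cmod b)\<^sup>2 * (cmod (\<psi> i))\<^sup>2" if "i \<in> basis d'" for i
    using that l by (simp add: dsum_apply_shift norm_mult power_mult_distrib)
  have "(\<Sum>i\<in>basis (dsum_dims d d'). ?f i) = (\<Sum>i\<in>basis d \<union> ?shift ` basis d'. ?f i)"
    using zero by (intro sum.mono_neutral_right[OF finite_basis sub]) blast
  also have "\<dots> = (\<Sum>i\<in>basis d. ?f i) + (\<Sum>i\<in>basis d'. ?f (?shift i))"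
    using disj inj by (simp add: sum.union_disjoint finite_basis sum.reindex)
  also have "\<dots> = (cmod a)\<^sup>2 * (\<Sum>i\<in>basis d. (cmod (\<phi> i))\<^sup>2) + (cmod b)\<^sup>2 * (\<Sum>i\<in>basis d'. (cmod (\<psi> i))\<^sup>2)"
    using first second by (simp add: sum_distrib_left)
  finally show ?thesis using s ab by (simp add: is_state_def dsum_def)
qed

lemma ghz_state:
  assumes "0 < k"
  shows "is_state (replicate k 2) (ghz k)"
proof -
  have ne: "replicate k (0::nat) \<noteq> replicate k 1" using assms by (cases k) auto
  have inb: "replicate k 0 \<in> basis (replicate k 2)" "replicate k 1 \<in> basis (replicate k 2)"
    by (auto simp: basis_def)
  have "(\<Sum>i\<in>basis (replicate k 2). (cmod (ghz k i))\<^sup>2)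
      = (\<Sum>i\<in>{replicate k 0, replicate k 1}. (cmod (ghz k i))\<^sup>2)"
    by (rule sum.mono_neutral_right[OF finite_basis]) (use inb in \<open>auto simp: ghz_def\<close>)
  also have "\<dots> = 1" using ne by (simp add: ghz_def norm_divide power_divide)
  finally show ?thesis using inb by (auto simp: is_state_def ghz_def)
qed

section \<open>Local relabelling and local measurements\<close>

definition relabel_party :: "nat list \<Rightarrow> nat \<Rightarrow> (nat \<Rightarrow> nat) \<Rightarrow> mvec \<Rightarrow> mvec" where
  "relabel_party D j \<sigma> \<phi> = (\<lambda>i. if i \<in> basis D then \<phi> (i[j := \<sigma> (i!j)]) else 0)"

definition relabel :: "nat list \<Rightarrow> (nat \<Rightarrow> nat \<Rightarrow> nat) \<Rightarrow> mvec \<Rightarrow> mvec" where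
  "relabel D \<sigma> \<phi> = (\<lambda>i. if i \<in> basis D then \<phi> (map (\<lambda>j. \<sigma> j (i!j)) [0..<length D]) else 0)"

lemma inj_on_relabel_index:
  assumes j: "j < length D" and inj: "inj_on \<sigma> {..<e}"
  shows "inj_on (\<lambda>i. i[j := \<sigma> (i!j)]) (basis (D[j:=e]))"
proof (rule inj_onI)
  fix x y assume x: "x \<in> basis (D[j:=e])" and y: "y \<in> basis (D[j:=e])"
    and eq: "x[j := \<sigma> (x!j)] = y[j := \<sigma> (y!j)]"
  have lx: "length x = length D" "x!j < e" and ly: "length y = length D" "y!j < e"
    using x y j by (auto simp: basis_list_update_iff)
  have "\<sigma> (x!j) = \<sigma> (y!j)" using arg_cong[OF eq, of "\<lambda>v. v!j"] lx ly j by simp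
  then have "x!j = y!j" using inj lx ly by (auto dest: inj_onD)
  moreover have "x!l = y!l" if "l \<noteq> j" for l
    using arg_cong[OF eq, of "\<lambda>v. v!l"] that by simp
  ultimately show "x = y" using lx ly by (metis nth_equalityI)
qed

lemma relabel_party_state:
  assumes st: "is_state D \<phi>" and j: "j < length D" and sig: "\<forall>c<e. \<sigma> c < D!j"
    and inj: "inj_on \<sigma> {..<e}" and supp: "\<forall>i. \<phi> i \<noteq> 0 \<longrightarrow> i!j \<in> \<sigma> ` {..<e}"
  shows "is_state (D[j:=e]) (relabel_party (D[j:=e]) j \<sigma> \<phi>)"
proof -
  let ?g = "\<lambda>i. i[j := \<sigma> (i!j)]"
  let ?B = "basis (D[j:=e])"
  have img: "?g ` ?B \<subseteq> basis D"
  proof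
    fix y assume "y \<in> ?g ` ?B"
    then obtain x where x: "x \<in> ?B" "y = ?g x" by blast
    then have "length x = length D" "\<forall>l<length D. l \<noteq> j \<longrightarrow> x!l < D!l" "x!j < e"
      using j by (auto simp: basis_list_update_iff)
    then show "y \<in> basis D" using x(2) sig j by (auto simp: basis_def nth_list_update)
  qed
  have cover: "\<phi> i = 0" if "i \<in> basis D - ?g ` ?B" for i
  proof (rule ccontr)
    assume "\<phi> i \<noteq> 0"
    then obtain c where c: "c < e" "i!j = \<sigma> c" using supp by auto
    have li: "length i = length D" "\<forall>l<length D. i!l < D!l" using that by (auto simp: basis_def)
    then have "i[j:=c] \<in> ?B" using c j by (auto simp: basis_list_update_iff nth_list_update)
    moreover have "i = ?g (i[j:=c])" using c j li by (simp flip: c(2))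
    ultimately have "i \<in> ?g ` ?B" by (rule rev_image_eqI)
    then show False using that by blast
  qed
  have "(\<Sum>i\<in>?B. (cmod (\<phi> (?g i)))\<^sup>2) = (\<Sum>i\<in>?g ` ?B. (cmod (\<phi> i))\<^sup>2)"
    using inj_on_relabel_index[OF j inj] by (simp add: sum.reindex)
  also have "\<dots> = (\<Sum>i\<in>basis D. (cmod (\<phi> i))\<^sup>2)"
    using cover by (intro sum.mono_neutral_left[OF finite_basis img]) auto
  finally show ?thesis using st by (simp add: is_state_def relabel_party_def)
qed

lemma relabel_id:
  assumes "is_state D \<phi>"
  shows "relabel D (\<lambda>_ c. c) \<phi> = \<phi>"
proof
  fix i show "relabel D (\<lambda>_ c. c) \<phi> i = \<phi> i"
  proof (cases "i \<in> basis D")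
    case True
    then have "map (\<lambda>j. i!j) [0..<length D] = i" by (auto simp: basis_def intro: nth_equalityI)
    then show ?thesis using True by (simp add: relabel_def)
  qed (use assms in \<open>simp add: relabel_def is_state_def\<close>)
qed

lemma relabel_party_relabel:
  assumes l: "l < length D" and sig: "\<forall>c<e. \<sigma> c < D!l" and \<tau>: "\<tau> l = (\<lambda>c. c)"
  shows "relabel_party (D[l:=e]) l \<sigma> (relabel D \<tau> \<phi>) = relabel (D[l:=e]) (\<tau>(l := \<sigma>)) \<phi>"
proof
  fix i show "relabel_party (D[l:=e]) l \<sigma> (relabel D \<tau> \<phi>) i = relabel (D[l:=e]) (\<tau>(l := \<sigma>)) \<phi> i"
  proof (cases "i \<in> basis (D[l:=e])")
    case True
    then have "i[l := \<sigma> (i!l)] \<in> basis D"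
      using l sig by (auto simp: basis_list_update_iff basis_def nth_list_update)
    moreover have idx: "map (\<lambda>j. \<tau> j (i[l := \<sigma> (i!l)] ! j)) [0..<length D]
        = map (\<lambda>j. (\<tau>(l := \<sigma>)) j (i!j)) [0..<length (D[l:=e])]"
      using True l \<tau> by (auto simp: basis_def nth_list_update)
    ultimately show ?thesis using True by (simp add: relabel_party_def relabel_def idx)
  qed (simp add: relabel_party_def relabel_def)
qed

text \<open>The local isometry \<open>|c\<rangle> \<mapsto> |\<sigma> c\<rangle>\<close> is inverted by a two-outcome instrument:
  outcome 0 maps \<open>|\<sigma> c\<rangle>\<close> back to \<open>|c\<rangle>\<close>, outcome 1 sends every basis vector outside the
  range of \<open>\<sigma>\<close> to \<open>|0\<rangle>\<close>.  On states supported in the range of \<open>\<sigma>\<close>, outcome 1 never occurs.\<close>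

definition relabel_kraus :: "nat \<Rightarrow> (nat \<Rightarrow> nat) \<Rightarrow> nat \<Rightarrow> nat \<Rightarrow> nat \<Rightarrow> nat \<Rightarrow> complex" where
  "relabel_kraus e \<sigma> m r c a =
     (if m = 0 then of_bool (a = \<sigma> c) else of_bool (c = 0 \<and> a = r \<and> r \<notin> \<sigma> ` {..<e}))"

lemma local_instrument_relabel_kraus:
  assumes inj: "inj_on \<sigma> {..<e}" and sig: "\<forall>c<e. \<sigma> c < n" and e: "0 < e"
  shows "local_instrument n e {0,1} (\<lambda>m. if m = 0 then 1 else n) (relabel_kraus e \<sigma>)"
  unfolding local_instrument_def
proof (intro conjI allI impI)
  fix a b assume a: "a < n" and "b < n"
  let ?S = "\<sigma> ` {..<e}"
  have keep: "(\<Sum>c<e. cnj (relabel_kraus e \<sigma> 0 0 c a) * relabel_kraus e \<sigma> 0 0 c b) = of_bool (a = b \<and> a \<in> ?S)"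
  proof (cases "a = b \<and> a \<in> ?S")
    case True
    then obtain c0 where c0: "c0 < e" "a = \<sigma> c0" by auto
    have "(\<Sum>c<e. cnj (relabel_kraus e \<sigma> 0 0 c a) * relabel_kraus e \<sigma> 0 0 c b) = (\<Sum>c<e. of_bool (c = c0))"
      using True c0 inj by (intro sum.cong) (auto simp: relabel_kraus_def dest: inj_onD)
    then show ?thesis using True c0 by force
  qed (auto simp: relabel_kraus_def intro!: sum.neutral)
  have discard: "(\<Sum>r<n. \<Sum>c<e. cnj (relabel_kraus e \<sigma> 1 r c a) * relabel_kraus e \<sigma> 1 r c b)
      = of_bool (a = b \<and> a \<notin> ?S)"
  proof (cases "a = b \<and> a \<notin> ?S")
    case True
    have "(\<Sum>r<n. \<Sum>c<e. cnj (relabel_kraus e \<sigma> 1 r c a) * relabel_kraus e \<sigma> 1 r c b)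
        = (\<Sum>r<n. \<Sum>c<e. of_bool (r = a \<and> c = 0))"
      using True by (intro sum.cong) (auto simp: relabel_kraus_def)
    also have "\<dots> = 1" using a e by (simp add: sum.delta' of_bool_conj flip: sum_distrib_left)
    finally show ?thesis using True by force
  qed (auto simp: relabel_kraus_def intro!: sum.neutral)
  show "(\<Sum>m\<in>{0,1}. \<Sum>r<(if m = 0 then 1 else n). \<Sum>c<e. cnj (relabel_kraus e \<sigma> m r c a) * relabel_kraus e \<sigma> m r c b)
      = (if a = b then 1 else 0)"
    using keep discard by auto
qed simp

lemma local_op_relabel_keep:
  assumes j: "j < length D" and sig: "\<forall>c<e. \<sigma> c < D!j"
  shows "local_op (D[j:=e]) j (D!j) 1 (relabel_kraus e \<sigma> 0) (proj \<phi>) = proj (relabel_party (D[j:=e]) j \<sigma> \<phi>)"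
proof (intro ext)
  fix i i'
  show "local_op (D[j:=e]) j (D!j) 1 (relabel_kraus e \<sigma> 0) (proj \<phi>) i i' = proj (relabel_party (D[j:=e]) j \<sigma> \<phi>) i i'"
  proof (cases "i \<in> basis (D[j:=e]) \<and> i' \<in> basis (D[j:=e])")
    case True
    then have "local_op (D[j:=e]) j (D!j) 1 (relabel_kraus e \<sigma> 0) (proj \<phi>) i i'
        = (\<Sum>a<D!j. \<Sum>b<D!j. relabel_kraus e \<sigma> 0 0 (i!j) a * proj \<phi> (i[j:=a]) (i'[j:=b])
            * cnj (relabel_kraus e \<sigma> 0 0 (i'!j) b))"
      by (simp add: local_op_def)
    also have "\<dots> = proj \<phi> (i[j := \<sigma> (i!j)]) (i'[j := \<sigma> (i'!j)])"
      using True j sig by (subst sum_sum_delta) (auto simp: basis_list_update_iff relabel_kraus_def)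
    finally show ?thesis using True by (simp add: relabel_party_def proj_def)
  qed (auto simp: local_op_def proj_def relabel_party_def)
qed

lemma local_op_relabel_discard:
  assumes st: "is_state D \<phi>" and j: "j < length D" and supp: "\<forall>i. \<phi> i \<noteq> 0 \<longrightarrow> i!j \<in> \<sigma> ` {..<e}"
  shows "local_op (D[j:=e]) j (D!j) (D!j) (relabel_kraus e \<sigma> 1) (proj \<phi>) = (\<lambda>_ _. 0)"
proof (intro ext)
  fix i i'
  have "relabel_kraus e \<sigma> 1 r (i!j) a * proj \<phi> (i[j:=a]) (i'[j:=b]) = 0"
    if "i \<in> basis (D[j:=e])" for r a b
  proof (cases "a \<in> \<sigma> ` {..<e}")
    case False
    then have "\<phi> (i[j:=a]) = 0" using supp that j by (fastforce simp: basis_list_update_iff)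
    then show ?thesis by (simp add: proj_def)
  qed (auto simp: relabel_kraus_def)
  then show "local_op (D[j:=e]) j (D!j) (D!j) (relabel_kraus e \<sigma> 1) (proj \<phi>) i i' = 0"
    by (auto simp: local_op_def intro!: sum.neutral)
qed

definition split_kraus :: "nat set \<Rightarrow> nat \<Rightarrow> nat \<Rightarrow> nat \<Rightarrow> nat \<Rightarrow> complex" where
  "split_kraus S m r c a = of_bool (c = a \<and> (a \<in> S \<longleftrightarrow> m = 0))"

lemma local_instrument_split_kraus: "local_instrument n n {0,1} (\<lambda>_. 1) (split_kraus S)"
  unfolding local_instrument_def
proof (intro conjI allI impI)
  fix a b assume "a < n" "b < n"
  have "cnj (split_kraus S m 0 c a) * split_kraus S m 0 c b = (if c = a then of_bool (a = b \<and> (a \<in> S \<longleftrightarrow> m = 0)) else 0)"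
    for m c by (auto simp: split_kraus_def)
  then have "(\<Sum>c<n. cnj (split_kraus S m 0 c a) * split_kraus S m 0 c b) = of_bool (a = b \<and> (a \<in> S \<longleftrightarrow> m = 0))"
    for m using \<open>a < n\<close> by simp
  then show "(\<Sum>m\<in>{0,1}. \<Sum>r<1. \<Sum>c<n. cnj (split_kraus S m r c a) * split_kraus S m r c b)
      = (if a = b then 1 else 0)" by (cases "a \<in> S") (simp_all del: sum_of_bool_eq)
qed simp

lemma local_op_split_kraus:
  assumes j: "j < length D" and st: "is_state D \<phi>"
  shows "local_op D j (D!j) 1 (split_kraus S m) (proj \<phi>) = proj (\<lambda>i. if i!j \<in> S \<longleftrightarrow> m = 0 then \<phi> i else 0)"
proof (intro ext)
  fix i i'
  show "local_op D j (D!j) 1 (split_kraus S m) (proj \<phi>) i i' = proj (\<lambda>i. if i!j \<in> S \<longleftrightarrow> m = 0 then \<phi> i else 0) i i'"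
  proof (cases "i \<in> basis D \<and> i' \<in> basis D")
    case True
    then have "local_op D j (D!j) 1 (split_kraus S m) (proj \<phi>) i i'
        = (\<Sum>a<D!j. \<Sum>b<D!j. split_kraus S m 0 (i!j) a * proj \<phi> (i[j:=a]) (i'[j:=b])
            * cnj (split_kraus S m 0 (i'!j) b))"
      by (simp add: local_op_def)
    also have "\<dots> = split_kraus S m 0 (i!j) (i!j) * proj \<phi> i i' * cnj (split_kraus S m 0 (i'!j) (i'!j))"
      using True j by (subst sum_sum_delta) (auto simp: basis_def split_kraus_def)
    finally show ?thesis by (simp add: split_kraus_def proj_def)
  qed (use st in \<open>auto simp: local_op_def proj_def is_state_def\<close>)
qed

lemma proj_scale: "proj (\<lambda>i. \<alpha> * \<chi> i) i i' = complex_of_real ((cmod \<alpha>)\<^sup>2) * proj \<chi> i i'"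
  unfolding proj_def complex_norm_square by (simp add: mult_ac)

lemma relabel_dsum_first:
  assumes "length d = length d'" "is_state d \<phi>"
  shows "relabel d (\<lambda>_ c. c) (dsum d d' 1 \<phi> b \<psi>) = \<phi>"
proof
  fix i show "relabel d (\<lambda>_ c. c) (dsum d d' 1 \<phi> b \<psi>) i = \<phi> i"
  proof (cases "i \<in> basis d")
    case True
    then have "map (\<lambda>j. i!j) [0..<length d] = i" "i \<in> basis (dsum_dims d d')" "\<forall>j<length d. i!j < d!j"
      using assms(1) by (auto simp: basis_def intro!: nth_equalityI)
    then show ?thesis using True by (simp add: relabel_def dsum_apply_first)
  qed (use assms(2) in \<open>simp add: relabel_def is_state_def\<close>)
qed

lemma relabel_dsum_second:
  assumes "length d = length d'" "0 < length d" "is_state d' \<psi>"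
  shows "relabel d' (\<lambda>j c. c + d!j) (dsum d d' a \<phi> 1 \<psi>) = \<psi>"
proof
  fix i show "relabel d' (\<lambda>j c. c + d!j) (dsum d d' a \<phi> 1 \<psi>) i = \<psi> i"
  proof (cases "i \<in> basis d'")
    case True
    then have "map (\<lambda>j. i!j + d!j) [0..<length d'] = map2 (+) i d"
      using assms(1) by (auto simp: basis_def intro!: nth_equalityI)
    then show ?thesis using True assms by (simp add: relabel_def dsum_apply_shift)
  qed (use assms(3) in \<open>simp add: relabel_def is_state_def\<close>)
qed

section \<open>The square of a superposition\<close>

text \<open>At a party with local dimensions \<open>a\<close> and \<open>b\<close>, a pair \<open>(u, v)\<close> of indices of
  \<open>\<complex>\<^sup>a \<oplus> \<complex>\<^sup>b\<close> is placed into one of four consecutive blocks of sizes \<open>a\<^sup>2, b\<^sup>2, ab, ab\<close>,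
  according to which summands \<open>u\<close> and \<open>v\<close> lie in; in the last block the pair is swapped.
  These are the blocks of \<open>square_dims\<close> below; \<open>square_fst\<close> and \<open>square_snd\<close> invert the placement.\<close>

definition square_index :: "nat \<Rightarrow> nat \<Rightarrow> nat \<Rightarrow> nat \<Rightarrow> nat" where
  "square_index a b u v =
     (if u < a \<and> v < a then u * a + v
      else if \<not> u < a \<and> \<not> v < a then a * a + (u - a) * b + (v - a)
      else if u < a then a * a + b * b + u * b + (v - a)
      else a * a + b * b + a * b + v * b + (u - a))"

definition square_fst :: "nat \<Rightarrow> nat \<Rightarrow> nat \<Rightarrow> nat" where
  "square_fst a b y =
     (if y < a * a then y div a
      else if y < a * a + b * b then a + (y - a * a) div b
      else if y - (a * a + b * b) < a * b then (y - (a * a + b * b)) div b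
      else a + (y - (a * a + b * b) - a * b) mod b)"

definition square_snd :: "nat \<Rightarrow> nat \<Rightarrow> nat \<Rightarrow> nat" where
  "square_snd a b y =
     (if y < a * a then y mod a
      else if y < a * a + b * b then a + (y - a * a) mod b
      else if y - (a * a + b * b) < a * b then a + (y - (a * a + b * b)) mod b
      else (y - (a * a + b * b) - a * b) div b)"

definition square_perm :: "nat \<Rightarrow> nat \<Rightarrow> nat \<Rightarrow> nat" where
  "square_perm a b y = square_fst a b y * (a + b) + square_snd a b y"

context
  fixes a b y :: nat
  assumes a: "0 < a" and b: "0 < b" and y: "y < a * a + b * b + 2 * (a * b)"
begin

lemma square_fst_snd_less: "square_fst a b y < a + b \<and> square_snd a b y < a + b"
proof -
  consider "y < a * a" | "a * a \<le> y" "y < a * a + b * b"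
    | "a * a + b * b \<le> y" "y - (a * a + b * b) < a * b"
    | "a * a + b * b \<le> y" "\<not> y - (a * a + b * b) < a * b"
    by linarith
  then show ?thesis
  proof cases
    case 1
    then show ?thesis using a by (simp add: square_fst_def square_snd_def less_mult_imp_div_less trans_less_add1)
  next
    case 2
    then have "(y - a * a) div b < b" by (intro less_mult_imp_div_less) linarith
    then show ?thesis using 2 b by (simp add: square_fst_def square_snd_def)
  next
    case 3
    then have "(y - (a * a + b * b)) div b < a" by (intro less_mult_imp_div_less) simp
    then show ?thesis using 3 b by (simp add: square_fst_def square_snd_def)
  next
    case 4
    then have "(y - (a * a + b * b) - a * b) div b < a" using y by (intro less_mult_imp_div_less) simp
    then show ?thesis using 4 b by (simp add: square_fst_def square_snd_def)
  qed
qed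

lemma square_index_fst_snd: "square_index a b (square_fst a b y) (square_snd a b y) = y"
proof -
  consider "y < a * a" | "a * a \<le> y" "y < a * a + b * b"
    | "a * a + b * b \<le> y" "y - (a * a + b * b) < a * b"
    | "a * a + b * b \<le> y" "\<not> y - (a * a + b * b) < a * b"
    by linarith
  then show ?thesis
  proof cases
    case 1
    then have "y div a < a" by (simp add: less_mult_imp_div_less)
    then show ?thesis using 1 a by (simp add: square_index_def square_fst_def square_snd_def mult.commute)
  next
    case 2
    then show ?thesis by (simp add: square_index_def square_fst_def square_snd_def)
  next
    case 3
    then have "(y - (a * a + b * b)) div b < a" by (intro less_mult_imp_div_less) simp
    then show ?thesis using 3 by (simp add: square_index_def square_fst_def square_snd_def)
  next
    case 4
    then have "(y - (a * a + b * b) - a * b) div b < a" using y by (intro less_mult_imp_div_less) simp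
    then show ?thesis using 4 by (simp add: square_index_def square_fst_def square_snd_def)
  qed
qed

end

lemma square_perm_less:
  assumes "0 < a" "0 < b" "y < a * a + b * b + 2 * (a * b)"
  shows "square_perm a b y < (a + b) * (a + b)"
proof -
  have "square_fst a b y < a + b" "square_snd a b y < a + b" using square_fst_snd_less[OF assms] by auto
  then have "square_perm a b y < (square_fst a b y + 1) * (a + b)" by (simp add: square_perm_def)
  also have "\<dots> \<le> (a + b) * (a + b)" using \<open>square_fst a b y < a + b\<close> by (intro mult_right_mono) auto
  finally show ?thesis .
qed

lemma inj_on_square_perm:
  assumes "0 < a" "0 < b"
  shows "inj_on (square_perm a b) {..<a * a + b * b + 2 * (a * b)}"
proof (rule inj_onI)
  fix x y assume x: "x \<in> {..<a * a + b * b + 2 * (a * b)}" and y: "y \<in> {..<a * a + b * b + 2 * (a * b)}"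
    and eq: "square_perm a b x = square_perm a b y"
  have "square_snd a b x < a + b" "square_snd a b y < a + b" using square_fst_snd_less assms x y by auto
  then have "square_fst a b x = square_fst a b y \<and> square_snd a b x = square_snd a b y"
    using eq divmod_add_mult unfolding square_perm_def by metis
  then show "x = y" using square_index_fst_snd assms x y by (metis lessThan_iff)
qed

lemma square_index_first:
  assumes "u < a" "v < a"
  shows "square_index a b u v < a * a" "square_index a b u v div a = u" "square_index a b u v mod a = v"
proof -
  have "u * a + v < (u + 1) * a" using assms by simp
  also have "\<dots> \<le> a * a" using assms by (intro mult_right_mono) auto
  finally show "square_index a b u v < a * a" using assms by (simp add: square_index_def)
qed (use assms in \<open>simp_all add: square_index_def divmod_add_mult\<close>)

lemma square_index_second:
  assumes "a \<le> u" "a \<le> v" "u < a + b" "v < a + b"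
  shows "a * a \<le> square_index a b u v" "square_index a b u v < a * a + b * b"
    "(square_index a b u v - a * a) div b = u - a" "(square_index a b u v - a * a) mod b = v - a"
proof -
  have idx: "square_index a b u v - a * a = (u - a) * b + (v - a)" using assms by (simp add: square_index_def)
  have vb: "v - a < b" using assms by simp
  have "(u - a) * b + (v - a) < (u - a + 1) * b" using vb by simp
  also have "\<dots> \<le> b * b" using assms by (intro mult_right_mono) auto
  finally show "square_index a b u v < a * a + b * b" using assms by (simp add: square_index_def)
  show "(square_index a b u v - a * a) div b = u - a" "(square_index a b u v - a * a) mod b = v - a"
    by (simp_all only: idx divmod_add_mult[OF vb])
qed (use assms in \<open>simp add: square_index_def\<close>)

lemma square_index_cross:
  assumes "u < a" "a \<le> v" "v < a + b"
  shows "a * a + b * b \<le> square_index a b u v" "square_index a b u v < a * a + b * b + 2 * (a * b)"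
    "(square_index a b u v - (a * a + b * b)) div (a * b) = 0"
    "(square_index a b u v - (a * a + b * b)) mod (a * b) div b = u"
    "(square_index a b u v - (a * a + b * b)) mod (a * b) mod b = v - a"
proof -
  have vb: "v - a < b" using assms by simp
  have lt: "u * b + (v - a) < a * b"
  proof -
    have "u * b + (v - a) < (u + 1) * b" using vb by simp
    also have "\<dots> \<le> a * b" using assms by (intro mult_right_mono) auto
    finally show ?thesis .
  qed
  have idx: "square_index a b u v - (a * a + b * b) = 0 * (a * b) + (u * b + (v - a))"
    using assms by (simp add: square_index_def)
  show "square_index a b u v < a * a + b * b + 2 * (a * b)" using assms lt by (simp add: square_index_def)
  show "(square_index a b u v - (a * a + b * b)) div (a * b) = 0"
    "(square_index a b u v - (a * a + b * b)) mod (a * b) div b = u"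
    "(square_index a b u v - (a * a + b * b)) mod (a * b) mod b = v - a"
    by (simp_all only: idx divmod_add_mult[OF lt] divmod_add_mult[OF vb])
qed (use assms in \<open>simp add: square_index_def\<close>)

lemma square_index_cross':
  assumes "v < a" "a \<le> u" "u < a + b"
  shows "a * a + b * b \<le> square_index a b u v" "square_index a b u v < a * a + b * b + 2 * (a * b)"
    "(square_index a b u v - (a * a + b * b)) div (a * b) = 1"
    "(square_index a b u v - (a * a + b * b)) mod (a * b) div b = v"
    "(square_index a b u v - (a * a + b * b)) mod (a * b) mod b = u - a"
proof -
  have ub: "u - a < b" using assms by simp
  have lt: "v * b + (u - a) < a * b"
  proof -
    have "v * b + (u - a) < (v + 1) * b" using ub by simp
    also have "\<dots> \<le> a * b" using assms by (intro mult_right_mono) auto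
    finally show ?thesis .
  qed
  have idx: "square_index a b u v - (a * a + b * b) = 1 * (a * b) + (v * b + (u - a))"
    using assms by (simp add: square_index_def)
  show "square_index a b u v < a * a + b * b + 2 * (a * b)" using assms lt by (simp add: square_index_def)
  show "(square_index a b u v - (a * a + b * b)) div (a * b) = 1"
    "(square_index a b u v - (a * a + b * b)) mod (a * b) div b = v"
    "(square_index a b u v - (a * a + b * b)) mod (a * b) mod b = u - a"
    by (simp_all only: idx divmod_add_mult[OF lt] divmod_add_mult[OF ub])
qed (use assms in \<open>simp add: square_index_def\<close>)

text \<open>With \<open>s = collision p\<close>, \<open>square_vec p\<close> is
  \<open>\<surd>s (\<surd>(p\<^sup>2/s) \<phi>\<phi> \<oplus> \<surd>((1-p)\<^sup>2/s) \<psi>\<psi>) \<oplus> \<surd>(1-s) GHZ \<phi>\<psi>\<close>, the local relabelling of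
  \<open>\<Phi> \<otimes> \<Phi>\<close> for \<open>\<Phi> = \<surd>p \<phi> \<oplus> \<surd>(1-p) \<psi>\<close> established in \<open>relabel_tensor_square\<close>.\<close>

definition collision :: "real \<Rightarrow> real" where
  "collision p = p\<^sup>2 + (1 - p)\<^sup>2"

definition agree_dims :: "nat list \<Rightarrow> nat list \<Rightarrow> nat list" where
  "agree_dims d d' = dsum_dims (tensor_dims d d) (tensor_dims d' d')"

definition agree_vec :: "real \<Rightarrow> nat list \<Rightarrow> nat list \<Rightarrow> mvec \<Rightarrow> mvec \<Rightarrow> mvec" where
  "agree_vec p d d' \<phi> \<psi> = dsum (tensor_dims d d) (tensor_dims d' d')
     (complex_of_real (sqrt (p\<^sup>2 / collision p))) (tensor d d \<phi> \<phi>)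
     (complex_of_real (sqrt (1 - p\<^sup>2 / collision p))) (tensor d' d' \<psi> \<psi>)"

definition cross_dims :: "nat list \<Rightarrow> nat list \<Rightarrow> nat list" where
  "cross_dims d d' = tensor_dims (replicate (length d) 2) (tensor_dims d d')"

definition cross_vec :: "nat list \<Rightarrow> nat list \<Rightarrow> mvec \<Rightarrow> mvec \<Rightarrow> mvec" where
  "cross_vec d d' \<phi> \<psi> = tensor (replicate (length d) 2) (tensor_dims d d') (ghz (length d)) (tensor d d' \<phi> \<psi>)"

definition square_dims :: "nat list \<Rightarrow> nat list \<Rightarrow> nat list" where
  "square_dims d d' = dsum_dims (agree_dims d d') (cross_dims d d')"

definition square_vec :: "real \<Rightarrow> nat list \<Rightarrow> nat list \<Rightarrow> mvec \<Rightarrow> mvec \<Rightarrow> mvec" where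
  "square_vec p d d' \<phi> \<psi> = dsum (agree_dims d d') (cross_dims d d')
     (complex_of_real (sqrt (collision p))) (agree_vec p d d' \<phi> \<psi>)
     (complex_of_real (sqrt (1 - collision p))) (cross_vec d d' \<phi> \<psi>)"

definition square_indices :: "nat list \<Rightarrow> nat list \<Rightarrow> nat list \<Rightarrow> nat list \<Rightarrow> nat list" where
  "square_indices d d' U V = map (\<lambda>j. square_index (d!j) (d'!j) (U!j) (V!j)) [0..<length d]"

lemma length_square_indices [simp]: "length (square_indices d d' U V) = length d"
  by (simp add: square_indices_def)

lemma nth_square_indices: "j < length d \<Longrightarrow> square_indices d d' U V ! j = square_index (d!j) (d'!j) (U!j) (V!j)"
  by (simp add: square_indices_def)

lemma one_minus_collision: "1 - collision p = 2 * p * (1 - p)"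
  by (simp add: collision_def power2_eq_square algebra_simps)

lemma collision_pos: "0 \<le> p \<Longrightarrow> p \<le> 1 \<Longrightarrow> 0 < collision p"
  by (cases "p = 0") (auto simp: collision_def add_pos_nonneg)

lemma collision_le_one: "0 \<le> p \<Longrightarrow> p \<le> 1 \<Longrightarrow> collision p \<le> 1"
  using one_minus_collision[of p] mult_nonneg_nonneg[of p "1 - p"] by linarith

lemma collision_ratio_bounds:
  "0 \<le> x \<Longrightarrow> x \<le> 1 \<Longrightarrow> 0 \<le> x\<^sup>2 / collision x \<and> x\<^sup>2 / collision x \<le> 1"
  using collision_pos[of x] by (simp add: collision_def)

lemma sqrt_collision:
  assumes "0 \<le> p" "p \<le> 1"
  shows "complex_of_real (sqrt (collision p)) * (complex_of_real (sqrt (p\<^sup>2 / collision p)) * x)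
      = complex_of_real (sqrt p) * complex_of_real (sqrt p) * x"
    "complex_of_real (sqrt (collision p)) * (complex_of_real (sqrt (1 - p\<^sup>2 / collision p)) * x)
      = complex_of_real (sqrt (1 - p)) * complex_of_real (sqrt (1 - p)) * x"
    "complex_of_real (sqrt (1 - collision p)) * (complex_of_real (1 / sqrt 2) * x)
      = complex_of_real (sqrt p) * complex_of_real (sqrt (1 - p)) * x"
proof -
  have s: "0 < collision p" using collision_pos[OF assms] .
  have "1 - p\<^sup>2 / collision p = (1 - p)\<^sup>2 / collision p" using s by (simp add: field_simps collision_def)
  then have r: "sqrt (collision p) * sqrt (p\<^sup>2 / collision p) = sqrt p * sqrt p"
    "sqrt (collision p) * sqrt (1 - p\<^sup>2 / collision p) = sqrt (1 - p) * sqrt (1 - p)"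
    using s assms by (simp_all flip: real_sqrt_mult)
  have "sqrt (1 - collision p) = sqrt 2 * sqrt p * sqrt (1 - p)"
    by (simp add: one_minus_collision real_sqrt_mult)
  then have "sqrt (1 - collision p) * (1 / sqrt 2) = sqrt p * sqrt (1 - p)" by simp
  with r show "complex_of_real (sqrt (collision p)) * (complex_of_real (sqrt (p\<^sup>2 / collision p)) * x)
      = complex_of_real (sqrt p) * complex_of_real (sqrt p) * x"
    "complex_of_real (sqrt (collision p)) * (complex_of_real (sqrt (1 - p\<^sup>2 / collision p)) * x)
      = complex_of_real (sqrt (1 - p)) * complex_of_real (sqrt (1 - p)) * x"
    "complex_of_real (sqrt (1 - collision p)) * (complex_of_real (1 / sqrt 2) * x)
      = complex_of_real (sqrt p) * complex_of_real (sqrt (1 - p)) * x"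
    by (simp_all only: mult.assoc[symmetric] of_real_mult[symmetric])
qed

lemma square_index_blocks:
  assumes "0 < a" "0 < b" "u < a + b" "v < a + b"
  shows "square_index a b u v < a * a \<longleftrightarrow> u < a \<and> v < a"
    "square_index a b u v < a * a + b * b \<longleftrightarrow> (u < a \<longleftrightarrow> v < a)"
    "a * a + b * b \<le> square_index a b u v \<Longrightarrow>
       (square_index a b u v - (a * a + b * b)) div (a * b) = (if u < a then 0 else 1)"
    "square_index a b u v < a * a + b * b + 2 * (a * b)"
  using assms square_index_first[of u a v b] square_index_second[of a u v b] square_index_cross[of u a v b]
    square_index_cross'[of v a u b]
  by (cases "u < a"; cases "v < a"; force)+

context
  fixes d d' U V :: "nat list"
  assumes l: "length d' = length d" "0 < length d" and pos: "\<forall>j<length d. 0 < d!j \<and> 0 < d'!j"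
    and U: "U \<in> basis (dsum_dims d d')" and V: "V \<in> basis (dsum_dims d d')"
begin

lemma indices_bounds: "length U = length d" "length V = length d"
    "\<And>j. j < length d \<Longrightarrow> U!j < d!j + d'!j \<and> V!j < d!j + d'!j"
  using U V l by (auto simp: basis_def)

lemma square_vec_first:
  assumes F: "\<forall>j<length d. U!j < d!j \<and> V!j < d!j"
  shows "square_vec p d d' \<phi> \<psi> (square_indices d d' U V)
    = complex_of_real (sqrt (collision p)) * (complex_of_real (sqrt (p\<^sup>2 / collision p)) * (\<phi> U * \<phi> V))"
proof -
  let ?i = "square_indices d d' U V"
  have lt: "\<forall>j<length d. ?i!j < d!j * d!j" using F by (simp add: nth_square_indices square_index_first)
  have dm: "map2 (div) ?i d = U" "map2 (mod) ?i d = V"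
    using F indices_bounds by (auto simp: square_indices_def square_index_first intro!: nth_equalityI)
  have "?i \<in> basis (tensor_dims d d)" "?i \<in> basis (dsum_dims (tensor_dims d d) (tensor_dims d' d'))"
    "?i \<in> basis (dsum_dims (dsum_dims (tensor_dims d d) (tensor_dims d' d'))
        (tensor_dims (replicate (length d) 2) (tensor_dims d d')))"
    using lt l by (auto simp: basis_def square_indices_def trans_less_add1)
  then show ?thesis using lt l by (simp add: square_vec_def agree_vec_def cross_vec_def agree_dims_def cross_dims_def dsum_apply_first tensor_apply dm trans_less_add1)
qed

lemma square_vec_second:
  assumes S: "\<forall>j<length d. d!j \<le> U!j \<and> d!j \<le> V!j"
  shows "square_vec p d d' \<phi> \<psi> (square_indices d d' U V)
    = complex_of_real (sqrt (collision p)) *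
      (complex_of_real (sqrt (1 - p\<^sup>2 / collision p)) * (\<psi> (map2 (-) U d) * \<psi> (map2 (-) V d)))"
proof -
  let ?i = "square_indices d d' U V"
  let ?w = "map2 (-) ?i (tensor_dims d d)"
  have blk: "\<forall>j<length d. d!j * d!j \<le> ?i!j \<and> ?i!j < d!j * d!j + d'!j * d'!j"
    using S indices_bounds by (simp add: nth_square_indices square_index_second)
  have w: "\<forall>j<length d. ?w!j = ?i!j - d!j * d!j" using l by (simp add: square_indices_def)
  have dm: "map2 (div) ?w d' = map2 (-) U d" "map2 (mod) ?w d' = map2 (-) V d"
    using S indices_bounds w l by (auto simp: nth_square_indices square_index_second intro!: nth_equalityI)
  have "?w \<in> basis (tensor_dims d' d')" using blk w l by (auto simp: basis_def square_indices_def less_diff_conv2)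
  moreover have "?i \<in> basis (dsum_dims (tensor_dims d d) (tensor_dims d' d'))"
    "?i \<in> basis (dsum_dims (dsum_dims (tensor_dims d d) (tensor_dims d' d'))
        (tensor_dims (replicate (length d) 2) (tensor_dims d d')))"
    using blk l by (auto simp: basis_def square_indices_def trans_less_add1)
  moreover have "\<forall>j<length (tensor_dims d d). tensor_dims d d ! j \<le> ?i!j" using blk l by simp
  ultimately show ?thesis using blk l pos
    by (simp add: square_vec_def agree_vec_def cross_vec_def agree_dims_def cross_dims_def dsum_apply_first dsum_apply_second tensor_apply dm trans_less_add1)
qed

lemma square_vec_cross:
  assumes FS: "\<forall>j<length d. U!j < d!j \<and> d!j \<le> V!j"
  shows "square_vec p d d' \<phi> \<psi> (square_indices d d' U V)
    = complex_of_real (sqrt (1 - collision p)) * (complex_of_real (1 / sqrt 2) * (\<phi> U * \<psi> (map2 (-) V d)))"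
proof -
  let ?i = "square_indices d d' U V"
  let ?AD = "dsum_dims (tensor_dims d d) (tensor_dims d' d')"
  let ?w = "map2 (-) ?i ?AD"
  let ?w' = "map2 (mod) ?w (tensor_dims d d')"
  have blk: "\<forall>j<length d. d!j * d!j + d'!j * d'!j \<le> ?i!j \<and> ?i!j < d!j * d!j + d'!j * d'!j + 2 * (d!j * d'!j)"
    using FS indices_bounds by (simp add: nth_square_indices square_index_cross)
  have w: "\<forall>j<length d. ?w!j = ?i!j - (d!j * d!j + d'!j * d'!j)" using l by (simp add: square_indices_def)
  have w': "\<forall>j<length d. ?w'!j = (?i!j - (d!j * d!j + d'!j * d'!j)) mod (d!j * d'!j)" using l w by simp
  have "map2 (div) ?w (tensor_dims d d') = replicate (length d) 0"
    using FS indices_bounds w pos l by (auto simp: nth_square_indices square_index_cross intro!: nth_equalityI)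
  then have ghz: "ghz (length d) (map2 (div) ?w (tensor_dims d d')) = complex_of_real (1 / sqrt 2)"
    by (simp add: ghz_def)
  have dm: "map2 (div) ?w' d' = U" "map2 (mod) ?w' d' = map2 (-) V d"
    using FS indices_bounds w' l by (auto simp: nth_square_indices square_index_cross intro!: nth_equalityI)
  have "?w \<in> basis (tensor_dims (replicate (length d) 2) (tensor_dims d d'))"
    using blk w l by (auto simp: basis_def square_indices_def less_diff_conv2)
  moreover have "?w' \<in> basis (tensor_dims d d')"
    using l pos by (auto simp: basis_def)
  moreover have "?i \<in> basis (square_dims d d')" "\<forall>j<length ?AD. ?AD ! j \<le> ?i!j"
    using blk l by (auto simp: basis_def square_indices_def square_dims_def agree_dims_def cross_dims_def)
  ultimately show ?thesis using l
    by (simp add: square_vec_def agree_vec_def cross_vec_def square_dims_def agree_dims_def cross_dims_def dsum_apply_second tensor_apply ghz dm)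
qed

lemma square_vec_cross':
  assumes FS: "\<forall>j<length d. V!j < d!j \<and> d!j \<le> U!j"
  shows "square_vec p d d' \<phi> \<psi> (square_indices d d' U V)
    = complex_of_real (sqrt (1 - collision p)) * (complex_of_real (1 / sqrt 2) * (\<phi> V * \<psi> (map2 (-) U d)))"
proof -
  let ?i = "square_indices d d' U V"
  let ?AD = "dsum_dims (tensor_dims d d) (tensor_dims d' d')"
  let ?w = "map2 (-) ?i ?AD"
  let ?w' = "map2 (mod) ?w (tensor_dims d d')"
  have blk: "\<forall>j<length d. d!j * d!j + d'!j * d'!j \<le> ?i!j \<and> ?i!j < d!j * d!j + d'!j * d'!j + 2 * (d!j * d'!j)"
    using FS indices_bounds by (simp add: nth_square_indices square_index_cross')
  have w: "\<forall>j<length d. ?w!j = ?i!j - (d!j * d!j + d'!j * d'!j)" using l by (simp add: square_indices_def)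
  have w': "\<forall>j<length d. ?w'!j = (?i!j - (d!j * d!j + d'!j * d'!j)) mod (d!j * d'!j)" using l w by simp
  have "map2 (div) ?w (tensor_dims d d') = replicate (length d) 1"
    using FS indices_bounds w pos l by (auto simp: nth_square_indices square_index_cross' intro!: nth_equalityI)
  then have ghz: "ghz (length d) (map2 (div) ?w (tensor_dims d d')) = complex_of_real (1 / sqrt 2)"
    by (simp add: ghz_def)
  have dm: "map2 (div) ?w' d' = V" "map2 (mod) ?w' d' = map2 (-) U d"
    using FS indices_bounds w' l by (auto simp: nth_square_indices square_index_cross' intro!: nth_equalityI)
  have "?w \<in> basis (tensor_dims (replicate (length d) 2) (tensor_dims d d'))"
    using blk w l by (auto simp: basis_def square_indices_def less_diff_conv2)
  moreover have "?w' \<in> basis (tensor_dims d d')"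
    using l pos by (auto simp: basis_def)
  moreover have "?i \<in> basis (square_dims d d')" "\<forall>j<length ?AD. ?AD ! j \<le> ?i!j"
    using blk l by (auto simp: basis_def square_indices_def square_dims_def agree_dims_def cross_dims_def)
  ultimately show ?thesis using l
    by (simp add: square_vec_def agree_vec_def cross_vec_def square_dims_def agree_dims_def cross_dims_def dsum_apply_second tensor_apply ghz dm)
qed

lemma square_indices_basis: "square_indices d d' U V \<in> basis (square_dims d d')"
  using square_index_blocks(4) indices_bounds pos l by (auto simp: basis_def square_dims_def agree_dims_def cross_dims_def nth_square_indices)

lemma square_indices_blocks:
  assumes "j < length d"
  shows "square_indices d d' U V ! j < d!j * d!j \<longleftrightarrow> U!j < d!j \<and> V!j < d!j"
    "square_indices d d' U V ! j < d!j * d!j + d'!j * d'!j \<longleftrightarrow> (U!j < d!j \<longleftrightarrow> V!j < d!j)"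
    "d!j * d!j + d'!j * d'!j \<le> square_indices d d' U V ! j \<Longrightarrow>
      (square_indices d d' U V ! j - (d!j * d!j + d'!j * d'!j)) div (d!j * d'!j) = (if U!j < d!j then 0 else 1)"
  using square_index_blocks[of "d!j" "d'!j" "U!j" "V!j"] indices_bounds pos l assms
  by (auto simp: nth_square_indices)

lemma agree_vec_nonzero:
  assumes lt: "\<forall>j<length d. square_indices d d' U V ! j < d!j * d!j + d'!j * d'!j"
    and nz: "agree_vec p d d' \<phi> \<psi> (square_indices d d' U V) \<noteq> 0"
  shows "(\<forall>j<length d. U!j < d!j \<and> V!j < d!j) \<or> (\<forall>j<length d. d!j \<le> U!j \<and> d!j \<le> V!j)"
proof -
  let ?i = "square_indices d d' U V"
  have "(\<forall>j<length (tensor_dims d d). ?i!j < tensor_dims d d ! j)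
      \<or> (\<forall>j<length (tensor_dims d d). tensor_dims d d ! j \<le> ?i!j)"
    using nz dsum_apply_mixed unfolding agree_vec_def by blast
  then consider "\<forall>j<length d. ?i!j < d!j * d!j" | "\<forall>j<length d. d!j * d!j \<le> ?i!j"
    using l by auto
  then show ?thesis
  proof cases
    case 1
    then show ?thesis using square_indices_blocks(1) by blast
  next
    case 2
    then have "d!j \<le> U!j \<and> d!j \<le> V!j" if "j < length d" for j
      using lt square_indices_blocks(1,2)[OF that] that by (auto simp: not_less[symmetric])
    then show ?thesis by blast
  qed
qed

lemma cross_vec_nonzero:
  assumes ge: "\<forall>j<length d. d!j * d!j + d'!j * d'!j \<le> square_indices d d' U V ! j"
    and nz: "cross_vec d d' \<phi> \<psi> (map2 (-) (square_indices d d' U V) (agree_dims d d')) \<noteq> 0"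
  shows "(\<forall>j<length d. U!j < d!j \<and> d!j \<le> V!j) \<or> (\<forall>j<length d. V!j < d!j \<and> d!j \<le> U!j)"
proof -
  let ?w = "map2 (-) (square_indices d d' U V) (agree_dims d d')"
  have "ghz (length d) (map2 (div) ?w (tensor_dims d d')) \<noteq> 0"
    using nz by (auto simp: cross_vec_def tensor_def split: if_splits)
  then have "map2 (div) ?w (tensor_dims d d') \<in> {replicate (length d) 0, replicate (length d) 1}"
    by (auto simp: ghz_def split: if_splits)
  moreover have "map2 (div) ?w (tensor_dims d d') ! j = (if U!j < d!j then 0 else 1)" if "j < length d" for j
    using ge square_indices_blocks(3)[OF that] that l by (simp add: agree_dims_def)
  ultimately have "(\<forall>j<length d. U!j < d!j) \<or> (\<forall>j<length d. \<not> U!j < d!j)"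
    by (fastforce split: if_splits)
  moreover have "U!j < d!j \<longleftrightarrow> d!j \<le> V!j" if "j < length d" for j
    using ge square_indices_blocks(2)[OF that] that by (auto simp: not_less[symmetric])
  ultimately show ?thesis by (auto simp: not_less)
qed

lemma square_vec_mixed:
  assumes "\<not> ((\<forall>j<length d. U!j < d!j) \<or> (\<forall>j<length d. d!j \<le> U!j))
    \<or> \<not> ((\<forall>j<length d. V!j < d!j) \<or> (\<forall>j<length d. d!j \<le> V!j))"
  shows "square_vec p d d' \<phi> \<psi> (square_indices d d' U V) = 0"
proof (rule ccontr)
  let ?i = "square_indices d d' U V"
  assume nz: "square_vec p d d' \<phi> \<psi> ?i \<noteq> 0"
  have "(\<forall>j<length (agree_dims d d'). ?i!j < agree_dims d d' ! j)
      \<or> (\<forall>j<length (agree_dims d d'). agree_dims d d' ! j \<le> ?i!j)"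
    using nz dsum_apply_mixed unfolding square_vec_def by blast
  then consider (agree) "\<forall>j<length d. ?i!j < d!j * d!j + d'!j * d'!j"
    | (cross) "\<forall>j<length d. d!j * d!j + d'!j * d'!j \<le> ?i!j"
    using l by (auto simp: agree_dims_def)
  then show False
  proof cases
    case agree
    have "square_vec p d d' \<phi> \<psi> ?i = complex_of_real (sqrt (collision p)) * agree_vec p d d' \<phi> \<psi> ?i"
      unfolding square_vec_def
      by (rule dsum_apply_first) (use square_indices_basis agree l in \<open>auto simp: square_dims_def agree_dims_def\<close>)
    then have "agree_vec p d d' \<phi> \<psi> ?i \<noteq> 0" using nz by auto
    then show False using agree_vec_nonzero[OF agree] assms by blast
  next
    case cross
    have "square_vec p d d' \<phi> \<psi> ?i
        = complex_of_real (sqrt (1 - collision p)) * cross_vec d d' \<phi> \<psi> (map2 (-) ?i (agree_dims d d'))"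
      unfolding square_vec_def
      by (rule dsum_apply_second) (use square_indices_basis cross l in \<open>auto simp: square_dims_def agree_dims_def\<close>)
    then have "cross_vec d d' \<phi> \<psi> (map2 (-) ?i (agree_dims d d')) \<noteq> 0" using nz by auto
    then show False using cross_vec_nonzero[OF cross] assms by blast
  qed
qed

lemma square_vec_square_indices:
  fixes \<phi> \<psi> :: mvec
  assumes p: "0 \<le> p" "p \<le> 1"
  defines "\<Phi> \<equiv> dsum d d' (complex_of_real (sqrt p)) \<phi> (complex_of_real (sqrt (1 - p))) \<psi>"
  shows "square_vec p d d' \<phi> \<psi> (square_indices d d' U V) = \<Phi> U * \<Phi> V"
proof -
  have \<Phi>: "\<Phi> W = (if \<forall>j<length d. W!j < d!j then complex_of_real (sqrt p) * \<phi> W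
      else if \<forall>j<length d. d!j \<le> W!j then complex_of_real (sqrt (1 - p)) * \<psi> (map2 (-) W d) else 0)"
    if "W \<in> basis (dsum_dims d d')" for W
    using that by (simp add: \<Phi>_def dsum_def)
  have second_not_first: "\<not> (\<forall>j<length d. W!j < d!j)" if "\<forall>j<length d. d!j \<le> W!j" for W
    using that l(2) leD by blast
  consider (FF) "\<forall>j<length d. U!j < d!j \<and> V!j < d!j" | (SS) "\<forall>j<length d. d!j \<le> U!j \<and> d!j \<le> V!j"
    | (FS) "\<forall>j<length d. U!j < d!j \<and> d!j \<le> V!j" | (SF) "\<forall>j<length d. V!j < d!j \<and> d!j \<le> U!j"
    | (mixed) "\<not> ((\<forall>j<length d. U!j < d!j) \<or> (\<forall>j<length d. d!j \<le> U!j))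
        \<or> \<not> ((\<forall>j<length d. V!j < d!j) \<or> (\<forall>j<length d. d!j \<le> V!j))"
    by blast
  then show ?thesis
  proof cases
    case FF
    then have "\<Phi> U = complex_of_real (sqrt p) * \<phi> U" "\<Phi> V = complex_of_real (sqrt p) * \<phi> V"
      using \<Phi>[OF U] \<Phi>[OF V] by simp_all
    moreover note square_vec_first[OF FF]
    ultimately show ?thesis using sqrt_collision(1)[OF p] by (simp add: mult_ac)
  next
    case SS
    then have "\<Phi> U = complex_of_real (sqrt (1 - p)) * \<psi> (map2 (-) U d)"
      "\<Phi> V = complex_of_real (sqrt (1 - p)) * \<psi> (map2 (-) V d)"
      using \<Phi>[OF U] \<Phi>[OF V] second_not_first[of U] second_not_first[of V] by simp_all
    moreover note square_vec_second[OF SS]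
    ultimately show ?thesis using sqrt_collision(2)[OF p] by (simp add: mult_ac)
  next
    case FS
    then have "\<Phi> U = complex_of_real (sqrt p) * \<phi> U"
      "\<Phi> V = complex_of_real (sqrt (1 - p)) * \<psi> (map2 (-) V d)"
      using \<Phi>[OF U] \<Phi>[OF V] second_not_first[of V] by simp_all
    note square_vec_cross[OF FS]
    also note sqrt_collision(3)[OF p]
    finally show ?thesis using \<open>\<Phi> U = _\<close> \<open>\<Phi> V = _\<close> by (simp add: mult_ac)
  next
    case SF
    then have "\<Phi> U = complex_of_real (sqrt (1 - p)) * \<psi> (map2 (-) U d)"
      "\<Phi> V = complex_of_real (sqrt p) * \<phi> V"
      using \<Phi>[OF U] \<Phi>[OF V] second_not_first[of U] by simp_all
    note square_vec_cross'[OF SF]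
    also note sqrt_collision(3)[OF p]
    finally show ?thesis using \<open>\<Phi> U = _\<close> \<open>\<Phi> V = _\<close> by (simp add: mult_ac)
  next
    case mixed
    then have "\<Phi> U * \<Phi> V = 0" using \<Phi>[OF U] \<Phi>[OF V] by auto
    then show ?thesis using square_vec_mixed[OF mixed] by simp
  qed
qed

end

lemma length_square_dims [simp]: "length d' = length d \<Longrightarrow> length (square_dims d d') = length d"
  by (simp add: square_dims_def agree_dims_def cross_dims_def)

lemma nth_square_dims:
  "length d' = length d \<Longrightarrow> j < length d \<Longrightarrow>
     square_dims d d' ! j = d!j * d!j + d'!j * d'!j + 2 * (d!j * d'!j)"
  by (simp add: square_dims_def agree_dims_def cross_dims_def)

lemma relabel_tensor_square:
  fixes \<phi> \<psi> :: mvec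
  assumes l: "length d' = length d" "0 < length d" and pos: "\<forall>j<length d. 0 < d!j \<and> 0 < d'!j"
    and p: "0 \<le> p" "p \<le> 1"
  defines "\<Phi> \<equiv> dsum d d' (complex_of_real (sqrt p)) \<phi> (complex_of_real (sqrt (1 - p))) \<psi>"
  shows "relabel (square_dims d d') (\<lambda>j. square_perm (d!j) (d'!j)) (tensor (dsum_dims d d') (dsum_dims d d') \<Phi> \<Phi>)
    = square_vec p d d' \<phi> \<psi>"
proof
  fix i
  show "relabel (square_dims d d') (\<lambda>j. square_perm (d!j) (d'!j)) (tensor (dsum_dims d d') (dsum_dims d d') \<Phi> \<Phi>) i
    = square_vec p d d' \<phi> \<psi> i"
  proof (cases "i \<in> basis (square_dims d d')")
    case True
    define U where "U = map (\<lambda>j. square_fst (d!j) (d'!j) (i!j)) [0..<length d]"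
    define V where "V = map (\<lambda>j. square_snd (d!j) (d'!j) (i!j)) [0..<length d]"
    let ?x = "map (\<lambda>j. square_perm (d!j) (d'!j) (i!j)) [0..<length d]"
    have i: "length i = length d" "\<And>j. j < length d \<Longrightarrow> i!j < d!j * d!j + d'!j * d'!j + 2 * (d!j * d'!j)"
      using True l by (auto simp: basis_def nth_square_dims)
    have UV: "U \<in> basis (dsum_dims d d')" "V \<in> basis (dsum_dims d d')"
      using square_fst_snd_less i pos l by (auto simp: basis_def U_def V_def)
    have "square_indices d d' U V = i"
      using square_index_fst_snd i pos by (auto simp: square_indices_def U_def V_def intro!: nth_equalityI)
    moreover have "?x \<in> basis (tensor_dims (dsum_dims d d') (dsum_dims d d'))"
      using square_perm_less i pos l by (auto simp: basis_def)
    moreover have "map2 (div) ?x (dsum_dims d d') = U" "map2 (mod) ?x (dsum_dims d d') = V"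
      using square_fst_snd_less i pos l
      by (auto simp: U_def V_def square_perm_def divmod_add_mult intro!: nth_equalityI)
    ultimately show ?thesis
      using True square_vec_square_indices[OF l pos UV p, of \<phi> \<psi>] l
      by (simp add: relabel_def tensor_apply \<Phi>_def)
  next
    case False
    then show ?thesis by (simp add: relabel_def square_vec_def square_dims_def dsum_def)
  qed
qed

lemma agree_vec_state:
  assumes "length d = length d'" "0 < length d" "is_state d \<phi>" "is_state d' \<psi>" "0 \<le> p" "p \<le> 1"
  shows "is_state (agree_dims d d') (agree_vec p d d' \<phi> \<psi>)"
  unfolding agree_dims_def agree_vec_def
  using assms collision_ratio_bounds[of p] by (intro dsum_state tensor_state) auto

lemma cross_vec_state:
  assumes "length d = length d'" "0 < length d" "is_state d \<phi>" "is_state d' \<psi>"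
  shows "is_state (cross_dims d d') (cross_vec d d' \<phi> \<psi>)"
  unfolding cross_dims_def cross_vec_def using assms by (intro tensor_state ghz_state) auto

section \<open>Binary entropy and the collision recursion\<close>

lemma h_one_minus: "h (1 - p) = h p"
  by (simp add: h_def algebra_simps)

text \<open>The chain rule for the entropy of two independent \<open>p\<close>-coins, split by whether they agree.\<close>

lemma h_collision:
  assumes p: "0 \<le> p" "p \<le> 1"
  shows "h (collision p) + collision p * h (p\<^sup>2 / collision p) + (1 - collision p) = 2 * h p"
proof (cases "p = 0 \<or> p = 1")
  case True
  then show ?thesis by (auto simp: collision_def h_def)
next
  case False
  define q where "q = 1 - p"
  define s where "s = collision p"
  have pq: "0 < p" "0 < q" "p + q = 1" using p False by (auto simp: q_def)
  have s: "0 < s" "s = p\<^sup>2 + q\<^sup>2" "1 - s = 2 * p * q"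
    using collision_pos[OF p] one_minus_collision[of p] by (auto simp: s_def q_def collision_def)
  have "1 - p\<^sup>2 / s = (s - p\<^sup>2) / s" using s(1) by (simp add: diff_divide_distrib)
  then have "1 - p\<^sup>2 / s = q\<^sup>2 / s" using s(2) by simp
  moreover have "log 2 (p\<^sup>2 / s) = 2 * log 2 p - log 2 s" "log 2 (q\<^sup>2 / s) = 2 * log 2 q - log 2 s"
    using pq s(1) by (simp_all add: log_divide_pos log_nat_power)
  ultimately have hps: "h (p\<^sup>2 / s) = - (p\<^sup>2 / s) * (2 * log 2 p - log 2 s) - (q\<^sup>2 / s) * (2 * log 2 q - log 2 s)"
    by (simp add: h_def)
  have "s * h (p\<^sup>2 / s) = - p\<^sup>2 * (2 * log 2 p - log 2 s) - q\<^sup>2 * (2 * log 2 q - log 2 s)"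
    unfolding hps using s(1) by (simp add: field_simps)
  moreover have "h s = - s * log 2 s - 2 * p * q * (1 + log 2 p + log 2 q)"
    using pq s by (simp add: h_def log_mult_pos)
  ultimately have "h s + s * h (p\<^sup>2 / s) + (1 - s)
      = - 2 * p * log 2 p * (p + q) - 2 * q * log 2 q * (p + q) + log 2 s * (p\<^sup>2 + q\<^sup>2 - s)"
    using s by (simp add: algebra_simps power2_eq_square)
  also have "\<dots> = 2 * h p" using pq s by (simp add: h_def q_def)
  finally show ?thesis by (simp add: s_def)
qed

lemma h_le_sqrt:
  assumes "0 \<le> p" "p \<le> 1"
  shows "h p \<le> 3 / ln 2 * sqrt p"
proof (cases "p = 0 \<or> p = 1")
  case False
  then have p: "0 < p" "p < 1" using assms by auto
  have sp: "0 < sqrt p" "sqrt p \<le> 1" using p by auto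
  have "- ln p / 2 = ln (1 / sqrt p)" using p by (simp add: ln_div ln_sqrt)
  also have "\<dots> \<le> 1 / sqrt p - 1" using sp by (intro ln_le_minus_one) simp
  finally have "p * (- ln p) \<le> p * (2 / sqrt p - 2)" using p by (intro mult_left_mono) auto
  also have "\<dots> = 2 * sqrt p - 2 * p" using sp p by (simp add: field_simps)
  finally have a: "- (p * ln p) \<le> 2 * sqrt p" using p by simp
  have "- ln (1 - p) = ln (1 / (1 - p))" using p by (simp add: ln_div)
  also have "\<dots> \<le> 1 / (1 - p) - 1" using p by (intro ln_le_minus_one) simp
  finally have "(1 - p) * (- ln (1 - p)) \<le> (1 - p) * (1 / (1 - p) - 1)" using p by (intro mult_left_mono) auto
  also have "\<dots> = p" using p by (simp add: field_simps)
  also have "p \<le> sqrt p" using sp mult_left_le[of "sqrt p" "sqrt p"] p by simp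
  finally have b: "- ((1 - p) * ln (1 - p)) \<le> sqrt p" by simp
  have "h p = (- (p * ln p) - (1 - p) * ln (1 - p)) / ln 2" by (simp add: h_def log_def diff_divide_distrib)
  also have "\<dots> \<le> (3 * sqrt p) / ln 2" using a b by (intro divide_right_mono) auto
  finally show ?thesis by simp
qed (auto simp: h_def)

lemma collision_le_one_minus:
  assumes "0 \<le> \<epsilon>" "\<epsilon> \<le> 1 / 2" "\<epsilon> \<le> x" "x \<le> 1 - \<epsilon>"
  shows "collision x \<le> 1 - \<epsilon>"
proof -
  have "\<epsilon> * (1 - \<epsilon>) \<le> x * (1 - x)"
  proof -
    have "0 \<le> (x - \<epsilon>) * ((1 - \<epsilon>) - x)" using assms by simp
    then show ?thesis by (simp add: algebra_simps)
  qed
  moreover have "\<epsilon> * (1 / 2) \<le> \<epsilon> * (1 - \<epsilon>)" using assms by (intro mult_left_mono) auto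
  ultimately show ?thesis using one_minus_collision[of x] by linarith
qed

text \<open>Near the endpoints the square-root bounds apply; in the middle \<open>collision x \<le> 1 - \<epsilon>\<close>
  makes the recursion contract.\<close>

lemma collision_recursion_improves:
  fixes G :: "real \<Rightarrow> real" and C g :: real
  assumes C: "0 < C"
    and near0: "\<And>x. 0 \<le> x \<Longrightarrow> x \<le> 1 \<Longrightarrow> - (C * sqrt x) \<le> G x"
    and near1: "\<And>x. 0 \<le> x \<Longrightarrow> x \<le> 1 \<Longrightarrow> - (C * sqrt (1 - x)) \<le> G x"
    and rec: "\<And>x. 0 \<le> x \<Longrightarrow> x \<le> 1 \<Longrightarrow> G (collision x) + collision x * G (x\<^sup>2 / collision x) \<le> 2 * G x"
    and g: "g < 0" "\<And>x. 0 \<le> x \<Longrightarrow> x \<le> 1 \<Longrightarrow> g \<le> G x"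
    and x: "0 \<le> x" "x \<le> 1"
  defines "\<epsilon> \<equiv> min (1 / 2) ((g / (2 * C))\<^sup>2)"
  shows "g * (1 - \<epsilon> / 2) \<le> G x"
proof -
  have \<epsilon>: "0 < \<epsilon>" "\<epsilon> \<le> 1 / 2" using g C by (auto simp: \<epsilon>_def)
  have small: "- (C * sqrt y) \<ge> g * (1 - \<epsilon> / 2)" if "0 \<le> y" "y \<le> \<epsilon>" for y
  proof -
    have "sqrt y \<le> sqrt ((g / (2 * C))\<^sup>2)" using that by (intro real_sqrt_le_mono) (simp add: \<epsilon>_def)
    also have "\<dots> = - g / (2 * C)" using g C by (simp add: divide_less_0_iff)
    finally have "C * sqrt y \<le> - g / 2" using C by (simp add: field_simps)
    moreover have "g / 2 \<ge> g * (1 - \<epsilon> / 2)" using g \<epsilon> by (simp add: field_simps)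
    ultimately show ?thesis by linarith
  qed
  consider "x \<le> \<epsilon>" | "1 - \<epsilon> \<le> x" | "\<epsilon> \<le> x" "x \<le> 1 - \<epsilon>" by linarith
  then show ?thesis
  proof cases
    case 1
    then show ?thesis using near0[OF x] small x by fastforce
  next
    case 2
    then show ?thesis using near1[OF x] small[of "1 - x"] x by fastforce
  next
    case 3
    let ?s = "collision x"
    have s: "0 \<le> ?s" "?s \<le> 1 - \<epsilon>"
      using collision_pos[OF x] collision_le_one_minus[OF _ \<epsilon>(2) 3] \<epsilon> by auto
    have "?s * g \<le> ?s * G (x\<^sup>2 / ?s)" using g(2) collision_ratio_bounds[OF x] s by (intro mult_left_mono) auto
    then have "g + ?s * g \<le> 2 * G x" using rec[OF x] g(2) s \<epsilon> by (smt (verit))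
    moreover have "g * (2 - \<epsilon>) \<le> g + ?s * g"
      using mult_left_mono_neg[of ?s "1 - \<epsilon>" g] s g by (simp add: algebra_simps)
    ultimately show ?thesis by (simp add: field_simps)
  qed
qed

lemma nonneg_of_collision_recursion:
  fixes G :: "real \<Rightarrow> real" and C :: real
  assumes C: "0 < C"
    and near0: "\<And>x. 0 \<le> x \<Longrightarrow> x \<le> 1 \<Longrightarrow> - (C * sqrt x) \<le> G x"
    and near1: "\<And>x. 0 \<le> x \<Longrightarrow> x \<le> 1 \<Longrightarrow> - (C * sqrt (1 - x)) \<le> G x"
    and rec: "\<And>x. 0 \<le> x \<Longrightarrow> x \<le> 1 \<Longrightarrow> G (collision x) + collision x * G (x\<^sup>2 / collision x) \<le> 2 * G x"
    and p: "0 \<le> p" "p \<le> 1"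
  shows "0 \<le> G p"
proof -
  define g where "g = Inf (G ` {0..1})"
  have "- C \<le> G x" if "0 \<le> x" "x \<le> 1" for x
  proof -
    have "C * sqrt x \<le> C * 1" using C that by (intro mult_left_mono) auto
    then show ?thesis using near0[OF that] by simp
  qed
  then have bdd: "bdd_below (G ` {0..1})" unfolding bdd_below_def by (intro exI[of _ "- C"]) auto
  have g_le: "g \<le> G x" if "0 \<le> x" "x \<le> 1" for x
    unfolding g_def by (rule cInf_lower[OF _ bdd]) (use that in auto)
  have "0 \<le> g"
  proof (rule ccontr)
    assume "\<not> 0 \<le> g"
    then have g0: "g < 0" by simp
    define \<epsilon> where "\<epsilon> = min (1 / 2) ((g / (2 * C))\<^sup>2)"
    have "g * (1 - \<epsilon> / 2) \<le> g" unfolding g_def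
      by (rule cInf_greatest) (use collision_recursion_improves[OF C near0 near1 rec g0 g_le] in
          \<open>auto simp: \<epsilon>_def g_def\<close>)
    moreover have "g * \<epsilon> < 0" using g0 C by (simp add: \<epsilon>_def mult_neg_pos)
    ultimately show False by (simp add: algebra_simps)
  qed
  then show ?thesis using g_le[OF p] by simp
qed

section \<open>Entanglement monotones\<close>

locale entanglement_measure =
  fixes E :: "nat list \<Rightarrow> mop \<Rightarrow> real" and k :: nat
  assumes k_pos: "0 < k"
    and additive: "\<And>d1 d2 \<phi>1 \<phi>2. length d1 = k \<Longrightarrow> length d2 = k \<Longrightarrow>
        is_state d1 \<phi>1 \<Longrightarrow> is_state d2 \<phi>2 \<Longrightarrow>
        E (tensor_dims d1 d2) (proj (tensor d1 d2 \<phi>1 \<phi>2)) = E d1 (proj \<phi>1) + E d2 (proj \<phi>2)"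
    and monotone: "\<And>d1 d2 T L X f P \<phi>0 \<chi>. length d1 = k \<Longrightarrow> locc d1 d2 T L \<Longrightarrow>
        is_state d1 \<phi>0 \<Longrightarrow> finite (X :: nat set) \<Longrightarrow> f ` T \<subseteq> X \<Longrightarrow>
        (\<And>x. x \<in> X \<Longrightarrow> is_state d2 (\<chi> x)) \<Longrightarrow>
        (\<And>x i i'. x \<in> X \<Longrightarrow>
            (\<Sum>t\<in>{t\<in>T. f t = x}. L t (proj \<phi>0) i i') = complex_of_real (P x) * proj (\<chi> x) i i') \<Longrightarrow>
        E d1 (proj \<phi>0) \<ge> (\<Sum>x\<in>X. P x * E d2 (proj (\<chi> x)))"
    and ghz_one: "E (replicate k 2) (proj (ghz k)) = 1"
begin

lemma local_instrument_mono:
  assumes len: "length D = k" and st: "is_state D \<phi>" and j: "j < k"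
    and instr: "local_instrument (D!j) e M N A"
    and post: "\<And>m. m \<in> M \<Longrightarrow> is_state (D[j:=e]) (\<chi> m)"
    and branch: "\<And>m i i'. m \<in> M \<Longrightarrow>
        local_op (D[j:=e]) j (D!j) (N m) (A m) (proj \<phi>) i i' = complex_of_real (P m) * proj (\<chi> m) i i'"
  shows "(\<Sum>m\<in>M. P m * E (D[j:=e]) (proj (\<chi> m))) \<le> E D (proj \<phi>)"
proof -
  have "locc D (D[j:=e]) (\<Union>m\<in>M. (\<lambda>y. m # y) ` {[]})
      (\<lambda>t \<rho>. (\<lambda>_ _ \<rho>. \<rho>) (hd t) (tl t) (local_op (D[j:=e]) j (D!j) (N (hd t)) (A (hd t)) \<rho>))"
    using j len by (intro locc_step[OF _ instr locc_id]) simp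
  then have lc: "locc D (D[j:=e]) ((\<lambda>m. [m]) ` M) (\<lambda>t. local_op (D[j:=e]) j (D!j) (N (hd t)) (A (hd t)))"
    by (simp add: UNION_singleton_eq_range)
  have fin: "finite M" using instr by (simp add: local_instrument_def)
  show ?thesis
  proof (rule monotone[OF len lc st fin, where f = hd])
    fix x i i' assume x: "x \<in> M"
    then have "{t \<in> (\<lambda>m. [m]) ` M. hd t = x} = {[x]}" by auto
    then show "(\<Sum>t\<in>{t \<in> (\<lambda>m. [m]) ` M. hd t = x}.
        local_op (D[j:=e]) j (D!j) (N (hd t)) (A (hd t)) (proj \<phi>) i i') = complex_of_real (P x) * proj (\<chi> x) i i'"
      using branch[OF x] by simp
  qed (use post in auto)
qed

lemma relabel_party_mono:
  assumes len: "length D = k" and st: "is_state D \<phi>" and j: "j < k" and sig: "\<forall>c<e. \<sigma> c < D!j"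
    and inj: "inj_on \<sigma> {..<e}" and supp: "\<forall>i. \<phi> i \<noteq> 0 \<longrightarrow> i!j \<in> \<sigma> ` {..<e}"
  shows "E (D[j:=e]) (proj (relabel_party (D[j:=e]) j \<sigma> \<phi>)) \<le> E D (proj \<phi>)"
proof -
  let ?\<chi> = "relabel_party (D[j:=e]) j \<sigma> \<phi>"
  have jD: "j < length D" using j len by simp
  have "0 < e" using is_state_nonzero[OF st] supp by fastforce
  have "(\<Sum>m\<in>{0::nat,1}. (if m = 0 then 1 else 0) * E (D[j:=e]) (proj ?\<chi>)) \<le> E D (proj \<phi>)"
  proof (rule local_instrument_mono[OF len st j local_instrument_relabel_kraus[OF inj sig \<open>0 < e\<close>],
        where P = "\<lambda>m. if m = 0 then 1 else 0" and \<chi> = "\<lambda>_. ?\<chi>"])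
    show "is_state (D[j:=e]) ?\<chi>" by (rule relabel_party_state[OF st jD sig inj supp])
    fix m i i' assume "m \<in> {0::nat,1}"
    then show "local_op (D[j:=e]) j (D!j) (if m = 0 then 1 else D!j) (relabel_kraus e \<sigma> m) (proj \<phi>) i i'
        = complex_of_real (if m = 0 then 1 else 0) * proj ?\<chi> i i'"
      using local_op_relabel_keep[OF jD sig] local_op_relabel_discard[OF st jD supp] by auto
  qed
  then show ?thesis by simp
qed

lemma relabel_mono:
  assumes len: "length D = k" "length e = k" and st: "is_state D \<phi>"
    and sig: "\<forall>j<k. \<forall>c<e!j. \<sigma> j c < D!j" and inj: "\<forall>j<k. inj_on (\<sigma> j) {..<e!j}"
    and supp: "\<forall>i. \<phi> i \<noteq> 0 \<longrightarrow> (\<forall>j<k. i!j \<in> \<sigma> j ` {..<e!j})"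
  shows "is_state e (relabel e \<sigma> \<phi>) \<and> E e (proj (relabel e \<sigma> \<phi>)) \<le> E D (proj \<phi>)"
proof -
  define Dl where "Dl l = map (\<lambda>j. if j < l then e!j else D!j) [0..<k]" for l
  define \<sigma>l where "\<sigma>l l j = (if j < l then \<sigma> j else (\<lambda>c. c))" for l j
  have "is_state (Dl l) (relabel (Dl l) (\<sigma>l l) \<phi>) \<and> E (Dl l) (proj (relabel (Dl l) (\<sigma>l l) \<phi>)) \<le> E D (proj \<phi>)"
    if "l \<le> k" for l
    using that
  proof (induction l)
    case 0
    have "Dl 0 = D" using len by (auto simp: Dl_def intro: nth_equalityI)
    moreover have "\<sigma>l 0 = (\<lambda>_ c. c)" by (simp add: \<sigma>l_def fun_eq_iff)
    ultimately show ?case using st by (simp add: relabel_id)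
  next
    case (Suc l)
    then have l: "l < k" by simp
    let ?\<psi> = "relabel (Dl l) (\<sigma>l l) \<phi>"
    have len_l: "length (Dl l) = k" by (simp add: Dl_def)
    have Dl_Suc: "Dl (Suc l) = (Dl l)[l := e!l]"
      using l by (auto simp: Dl_def nth_list_update intro!: nth_equalityI)
    have \<sigma>l_Suc: "\<sigma>l (Suc l) = (\<sigma>l l)(l := \<sigma> l)" by (auto simp: \<sigma>l_def)
    have sig_l: "\<forall>c<e!l. \<sigma> l c < Dl l ! l" using sig l by (simp add: Dl_def)
    have supp_l: "\<forall>i. ?\<psi> i \<noteq> 0 \<longrightarrow> i!l \<in> \<sigma> l ` {..<e!l}"
    proof (intro allI impI)
      fix i assume "?\<psi> i \<noteq> 0"
      then have "\<phi> (map (\<lambda>j. \<sigma>l l j (i!j)) [0..<k]) \<noteq> 0" by (simp add: relabel_def len_l split: if_splits)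
      then show "i!l \<in> \<sigma> l ` {..<e!l}" using supp l by (force simp: \<sigma>l_def)
    qed
    have "relabel (Dl (Suc l)) (\<sigma>l (Suc l)) \<phi> = relabel_party ((Dl l)[l := e!l]) l (\<sigma> l) ?\<psi>"
      unfolding Dl_Suc \<sigma>l_Suc using l sig_l len_l by (subst relabel_party_relabel) (auto simp: \<sigma>l_def)
    then show ?case
      using Suc l relabel_party_state[OF _ _ sig_l _ supp_l] relabel_party_mono[OF len_l _ l sig_l _ supp_l]
        inj len_l Dl_Suc by fastforce
  qed
  moreover have "Dl k = e" using len by (auto simp: Dl_def intro: nth_equalityI)
  moreover have "relabel e (\<sigma>l k) \<phi> = relabel e \<sigma> \<phi>"
  proof -
    have "map (\<lambda>j. \<sigma>l k j (i!j)) [0..<length e] = map (\<lambda>j. \<sigma> j (i!j)) [0..<length e]" for i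
      using len by (simp add: \<sigma>l_def)
    then show ?thesis unfolding relabel_def by presburger
  qed
  ultimately show ?thesis by (metis order_refl)
qed

lemma local_measurement_mono:
  assumes len: "length D = k" and st: "is_state D \<phi>" and j: "j < k"
    and st1: "is_state D \<chi>1" and st2: "is_state D \<chi>2"
    and split1: "\<And>i. (if i!j \<in> S then \<phi> i else 0) = \<alpha>1 * \<chi>1 i"
    and split2: "\<And>i. (if i!j \<notin> S then \<phi> i else 0) = \<alpha>2 * \<chi>2 i"
  shows "(cmod \<alpha>1)\<^sup>2 * E D (proj \<chi>1) + (cmod \<alpha>2)\<^sup>2 * E D (proj \<chi>2) \<le> E D (proj \<phi>)"
proof -
  have jD: "j < length D" using j len by simp
  have "(\<Sum>m\<in>{0::nat,1}. (if m = 0 then (cmod \<alpha>1)\<^sup>2 else (cmod \<alpha>2)\<^sup>2) *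
      E (D[j := D!j]) (proj (if m = 0 then \<chi>1 else \<chi>2))) \<le> E D (proj \<phi>)"
  proof (rule local_instrument_mono[OF len st j local_instrument_split_kraus])
    fix m i i' assume "m \<in> {0::nat,1}"
    then show "local_op (D[j := D!j]) j (D!j) 1 (split_kraus S m) (proj \<phi>) i i'
        = complex_of_real (if m = 0 then (cmod \<alpha>1)\<^sup>2 else (cmod \<alpha>2)\<^sup>2) * proj (if m = 0 then \<chi>1 else \<chi>2) i i'"
      using local_op_split_kraus[OF jD st] split1 split2 proj_scale by auto
  qed (use st1 st2 in auto)
  then show ?thesis by simp
qed

lemma dsum_first_mono:
  assumes l: "length d = k" "length d' = k" and s1: "is_state d \<phi>" and s2: "is_state d' \<psi>"
  shows "E d (proj \<phi>) \<le> E (dsum_dims d d') (proj (dsum d d' 1 \<phi> 0 \<psi>))"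
proof -
  have "is_state (dsum_dims d d') (dsum d d' 1 \<phi> 0 \<psi>)" using l k_pos s1 s2 by (intro dsum_state) auto
  moreover have "\<forall>i. dsum d d' 1 \<phi> 0 \<psi> i \<noteq> 0 \<longrightarrow> (\<forall>j<k. i!j \<in> (\<lambda>c. c) ` {..<d!j})"
    using l by (auto simp: dsum_def split: if_splits)
  ultimately show ?thesis
    using relabel_mono[of "dsum_dims d d'" d "dsum d d' 1 \<phi> 0 \<psi>" "\<lambda>_ c. c"] relabel_dsum_first[of d d' \<phi> 0 \<psi>] l s1 by auto
qed

lemma dsum_second_mono:
  assumes l: "length d = k" "length d' = k" and s1: "is_state d \<phi>" and s2: "is_state d' \<psi>"
  shows "E d' (proj \<psi>) \<le> E (dsum_dims d d') (proj (dsum d d' 0 \<phi> 1 \<psi>))"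
proof -
  have "is_state (dsum_dims d d') (dsum d d' 0 \<phi> 1 \<psi>)" using l k_pos s1 s2 by (intro dsum_state) auto
  moreover have "i!j \<in> (\<lambda>c. c + d!j) ` {..<d'!j}" if "dsum d d' 0 \<phi> 1 \<psi> i \<noteq> 0" "j < k" for i j
  proof -
    have "i!j < d!j + d'!j" "d!j \<le> i!j"
      using that l by (auto simp: dsum_def basis_def split: if_splits)
    then show ?thesis by (auto intro!: image_eqI[where x = "i!j - d!j"])
  qed
  ultimately show ?thesis
    using relabel_mono[of "dsum_dims d d'" d' "dsum d d' 0 \<phi> 1 \<psi>" "\<lambda>j c. c + d!j"] relabel_dsum_second[of d d' \<psi> 0 \<phi>] l k_pos s2
    by (auto intro: inj_onI)
qed

lemma dsum_ge_average:
  assumes l: "length d = k" "length d' = k" and s1: "is_state d \<phi>" and s2: "is_state d' \<psi>"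
    and p: "0 \<le> p" "p \<le> 1"
  shows "p * E d (proj \<phi>) + (1 - p) * E d' (proj \<psi>) \<le>
     E (dsum_dims d d') (proj (dsum d d' (complex_of_real (sqrt p)) \<phi> (complex_of_real (sqrt (1 - p))) \<psi>))"
proof -
  let ?D = "dsum_dims d d'"
  let ?\<Phi> = "dsum d d' (complex_of_real (sqrt p)) \<phi> (complex_of_real (sqrt (1 - p))) \<psi>"
  let ?\<chi>1 = "dsum d d' 1 \<phi> 0 \<psi>" and ?\<chi>2 = "dsum d d' 0 \<phi> 1 \<psi>"
  have lD: "length ?D = k" and k0: "0 < length d" using l k_pos by auto
  have st: "is_state ?D ?\<Phi>" and st1: "is_state ?D ?\<chi>1" and st2: "is_state ?D ?\<chi>2"
    using l k0 s1 s2 p by (auto intro!: dsum_state)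
  have "(cmod (complex_of_real (sqrt p)))\<^sup>2 * E ?D (proj ?\<chi>1)
      + (cmod (complex_of_real (sqrt (1 - p))))\<^sup>2 * E ?D (proj ?\<chi>2) \<le> E ?D (proj ?\<Phi>)"
  proof (rule local_measurement_mono[OF lD st k_pos st1 st2, where S = "{..<d!0}"])
    show "(if i!0 \<in> {..<d!0} then ?\<Phi> i else 0) = complex_of_real (sqrt p) * ?\<chi>1 i" for i
      using k0 by (auto simp: dsum_def)
    show "(if i!0 \<notin> {..<d!0} then ?\<Phi> i else 0) = complex_of_real (sqrt (1 - p)) * ?\<chi>2 i" for i
      using k0 by (auto simp: dsum_def)
  qed
  then have "p * E ?D (proj ?\<chi>1) + (1 - p) * E ?D (proj ?\<chi>2) \<le> E ?D (proj ?\<Phi>)"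
    using p by simp
  then show ?thesis
    using dsum_first_mono[OF l s1 s2] dsum_second_mono[OF l s1 s2] p
      mult_left_mono[of _ _ p] mult_left_mono[of _ _ "1 - p"] by (smt (verit))
qed
lemma square_vec_le_double:
  assumes l: "length d = k" "length d' = k" and s1: "is_state d \<phi>" and s2: "is_state d' \<psi>"
    and p: "0 \<le> p" "p \<le> 1"
  shows "E (square_dims d d') (proj (square_vec p d d' \<phi> \<psi>)) \<le>
    2 * E (dsum_dims d d') (proj (dsum d d' (complex_of_real (sqrt p)) \<phi> (complex_of_real (sqrt (1 - p))) \<psi>))"
proof -
  let ?D0 = "dsum_dims d d'"
  let ?\<Phi> = "dsum d d' (complex_of_real (sqrt p)) \<phi> (complex_of_real (sqrt (1 - p))) \<psi>"
  let ?\<sigma> = "\<lambda>j. square_perm (d!j) (d'!j)"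
  have l': "length d' = length d" "0 < length d" using l k_pos by auto
  have pos: "\<forall>j<length d. 0 < d!j \<and> 0 < d'!j" using s1 s2 l by (auto intro: is_state_dims_pos)
  have st\<Phi>: "is_state ?D0 ?\<Phi>" using l' s1 s2 p by (intro dsum_state) auto
  have st: "is_state (tensor_dims ?D0 ?D0) (tensor ?D0 ?D0 ?\<Phi> ?\<Phi>)" using st\<Phi> by (intro tensor_state) auto
  have dims: "square_dims d d' ! j = tensor_dims ?D0 ?D0 ! j" if "j < k" for j
    using that l by (simp add: nth_square_dims algebra_simps)
  have sig: "\<forall>j<k. \<forall>c<square_dims d d' ! j. ?\<sigma> j c < tensor_dims ?D0 ?D0 ! j"
    using square_perm_less pos l by (auto simp: nth_square_dims)
  have inj: "\<forall>j<k. inj_on (?\<sigma> j) {..<square_dims d d' ! j}"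
    using inj_on_square_perm pos l by (auto simp: nth_square_dims)
  have onto: "?\<sigma> j ` {..<square_dims d d' ! j} = {..<square_dims d d' ! j}" if "j < k" for j
    using endo_inj_surj[of "{..<square_dims d d' ! j}" "?\<sigma> j"] sig inj dims that by auto
  have supp: "\<forall>i. tensor ?D0 ?D0 ?\<Phi> ?\<Phi> i \<noteq> 0 \<longrightarrow> (\<forall>j<k. i!j \<in> ?\<sigma> j ` {..<square_dims d d' ! j})"
    using st onto dims l by (auto simp: is_state_def basis_def)
  have "E (square_dims d d') (proj (relabel (square_dims d d') ?\<sigma> (tensor ?D0 ?D0 ?\<Phi> ?\<Phi>)))
      \<le> E (tensor_dims ?D0 ?D0) (proj (tensor ?D0 ?D0 ?\<Phi> ?\<Phi>))"
    using relabel_mono[OF _ _ st sig inj supp] l by simp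
  then show ?thesis using relabel_tensor_square[OF l' pos p] additive[OF _ _ st\<Phi> st\<Phi>] l by simp
qed

definition defect :: "real \<Rightarrow> nat list \<Rightarrow> nat list \<Rightarrow> mvec \<Rightarrow> mvec \<Rightarrow> real" where
  "defect p d d' \<phi> \<psi> =
     E (dsum_dims d d') (proj (dsum d d' (complex_of_real (sqrt p)) \<phi> (complex_of_real (sqrt (1 - p))) \<psi>))
     - p * E d (proj \<phi>) - (1 - p) * E d' (proj \<psi>) - h p"

definition defects :: "real \<Rightarrow> real set" where
  "defects p = {defect p d d' \<phi> \<psi> | d d' \<phi> \<psi>.
     length d = k \<and> length d' = k \<and> is_state d \<phi> \<and> is_state d' \<psi>}"

definition min_defect :: "real \<Rightarrow> real" where
  "min_defect p = Inf (defects p)"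

lemma defect_ge:
  assumes "length d = k" "length d' = k" "is_state d \<phi>" "is_state d' \<psi>" "0 \<le> p" "p \<le> 1"
  shows "- h p \<le> defect p d d' \<phi> \<psi>"
  using dsum_ge_average[OF assms] by (simp add: defect_def)

lemma defects_nonempty: "defects p \<noteq> {}"
proof -
  have "defect p (replicate k 2) (replicate k 2) (ghz k) (ghz k) \<in> defects p"
    using ghz_state[OF k_pos] unfolding defects_def by fastforce
  then show ?thesis by blast
qed

lemma min_defect_le:
  assumes p: "0 \<le> p" "p \<le> 1" and "length d = k" "length d' = k" "is_state d \<phi>" "is_state d' \<psi>"
  shows "min_defect p \<le> defect p d d' \<phi> \<psi>"
  unfolding min_defect_def
proof (rule cInf_lower)
  show "bdd_below (defects p)"
    using defect_ge[OF _ _ _ _ p] unfolding defects_def by (intro bdd_belowI[of _ "- h p"]) blast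
qed (use assms in \<open>auto simp: defects_def\<close>)

lemma min_defect_ge: "0 \<le> p \<Longrightarrow> p \<le> 1 \<Longrightarrow> - h p \<le> min_defect p"
  unfolding min_defect_def using defect_ge
  by (intro cInf_greatest[OF defects_nonempty]) (auto simp: defects_def)

lemma defect_square:
  assumes l: "length d = k" "length d' = k" and s1: "is_state d \<phi>" and s2: "is_state d' \<psi>"
    and p: "0 \<le> p" "p \<le> 1"
  shows "defect (collision p) (agree_dims d d') (cross_dims d d') (agree_vec p d d' \<phi> \<psi>) (cross_vec d d' \<phi> \<psi>)
      + collision p * defect (p\<^sup>2 / collision p) (tensor_dims d d) (tensor_dims d' d') (tensor d d \<phi> \<phi>) (tensor d' d' \<psi> \<psi>)
    \<le> 2 * defect p d d' \<phi> \<psi>"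
proof -
  define s where "s = collision p"
  define e\<phi> e\<psi> where "e\<phi> = E d (proj \<phi>)" and "e\<psi> = E d' (proj \<psi>)"
  define D where "D = defect (p\<^sup>2 / s) (tensor_dims d d) (tensor_dims d' d') (tensor d d \<phi> \<phi>) (tensor d' d' \<psi> \<psi>)"
  have s: "0 < s" "s * (p\<^sup>2 / s) = p\<^sup>2" "s * (1 - p\<^sup>2 / s) = (1 - p)\<^sup>2" "1 - s = 2 * p * (1 - p)"
    using collision_pos[OF p] one_minus_collision[of p] by (auto simp: s_def collision_def field_simps)
  have "E (agree_dims d d') (proj (agree_vec p d d' \<phi> \<psi>))
      = D + (p\<^sup>2 / s) * (2 * e\<phi>) + (1 - p\<^sup>2 / s) * (2 * e\<psi>) + h (p\<^sup>2 / s)"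
    using additive[OF l(1) l(1) s1 s1] additive[OF l(2) l(2) s2 s2]
    by (simp add: defect_def agree_vec_def agree_dims_def D_def e\<phi>_def e\<psi>_def s_def)
  then have "s * E (agree_dims d d') (proj (agree_vec p d d' \<phi> \<psi>))
      = s * D + (s * (p\<^sup>2 / s)) * (2 * e\<phi>) + (s * (1 - p\<^sup>2 / s)) * (2 * e\<psi>) + s * h (p\<^sup>2 / s)"
    by (simp only: distrib_left mult.assoc)
  then have agree: "s * E (agree_dims d d') (proj (agree_vec p d d' \<phi> \<psi>))
      = s * D + 2 * p\<^sup>2 * e\<phi> + 2 * (1 - p)\<^sup>2 * e\<psi> + s * h (p\<^sup>2 / s)"
    using s(2,3) by simp
  have "E (cross_dims d d') (proj (cross_vec d d' \<phi> \<psi>)) = 1 + e\<phi> + e\<psi>"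
    using additive[of "replicate k 2" "tensor_dims d d'"] ghz_state[OF k_pos] tensor_state[OF _ s1 s2]
      additive[OF l s1 s2] ghz_one l
    by (simp add: cross_vec_def cross_dims_def e\<phi>_def e\<psi>_def)
  then have cross: "(1 - s) * E (cross_dims d d') (proj (cross_vec d d' \<phi> \<psi>)) = 2 * p * (1 - p) * (1 + e\<phi> + e\<psi>)"
    using s by simp
  have hs: "s * h (p\<^sup>2 / s) = 2 * h p - h s - 2 * p * (1 - p)"
    using h_collision[OF p] s(4) by (simp add: s_def)
  have "E (square_dims d d') (proj (square_vec p d d' \<phi> \<psi>))
      = defect s (agree_dims d d') (cross_dims d d') (agree_vec p d d' \<phi> \<psi>) (cross_vec d d' \<phi> \<psi>)
        + s * E (agree_dims d d') (proj (agree_vec p d d' \<phi> \<psi>))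
        + (1 - s) * E (cross_dims d d') (proj (cross_vec d d' \<phi> \<psi>)) + h s"
    by (simp add: defect_def square_vec_def square_dims_def s_def)
  also have "\<dots> = defect s (agree_dims d d') (cross_dims d d') (agree_vec p d d' \<phi> \<psi>) (cross_vec d d' \<phi> \<psi>)
        + (s * D + 2 * p\<^sup>2 * e\<phi> + 2 * (1 - p)\<^sup>2 * e\<psi> + s * h (p\<^sup>2 / s))
        + 2 * p * (1 - p) * (1 + e\<phi> + e\<psi>) + h s"
    by (simp only: agree cross)
  also have "\<dots> = defect s (agree_dims d d') (cross_dims d d') (agree_vec p d d' \<phi> \<psi>) (cross_vec d d' \<phi> \<psi>)
        + s * D + 2 * (p * e\<phi> + (1 - p) * e\<psi> + h p)"
    unfolding hs by (simp add: algebra_simps power2_eq_square)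
  finally have "\<dots> \<le> 2 * (defect p d d' \<phi> \<psi> + p * e\<phi> + (1 - p) * e\<psi> + h p)"
    using square_vec_le_double[OF l s1 s2 p] by (simp add: defect_def e\<phi>_def e\<psi>_def)
  then show ?thesis unfolding s_def[symmetric] D_def[symmetric] by simp
qed

lemma min_defect_collision:
  assumes p: "0 \<le> p" "p \<le> 1"
  shows "min_defect (collision p) + collision p * min_defect (p\<^sup>2 / collision p) \<le> 2 * min_defect p"
proof -
  have s: "0 \<le> collision p" "collision p \<le> 1" "0 \<le> p\<^sup>2 / collision p" "p\<^sup>2 / collision p \<le> 1"
    using collision_pos[OF p] collision_le_one[OF p] collision_ratio_bounds[OF p] by auto
  have "(min_defect (collision p) + collision p * min_defect (p\<^sup>2 / collision p)) / 2 \<le> min_defect p"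
    unfolding min_defect_def[of p]
  proof (rule cInf_greatest[OF defects_nonempty])
    fix x assume "x \<in> defects p"
    then obtain d d' \<phi> \<psi> where x: "x = defect p d d' \<phi> \<psi>"
      and l: "length d = k" "length d' = k" and st: "is_state d \<phi>" "is_state d' \<psi>"
      unfolding defects_def by blast
    have l': "length d = length d'" "0 < length d" using l k_pos by auto
    have "min_defect (collision p) \<le> defect (collision p) (agree_dims d d') (cross_dims d d')
        (agree_vec p d d' \<phi> \<psi>) (cross_vec d d' \<phi> \<psi>)"
      using agree_vec_state[OF l' st p] cross_vec_state[OF l' st] l
      by (intro min_defect_le[OF s(1,2)]) (auto simp: agree_dims_def cross_dims_def)
    moreover have "min_defect (p\<^sup>2 / collision p)
        \<le> defect (p\<^sup>2 / collision p) (tensor_dims d d) (tensor_dims d' d') (tensor d d \<phi> \<phi>) (tensor d' d' \<psi> \<psi>)"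
      using st l by (intro min_defect_le[OF s(3,4)] tensor_state) auto
    ultimately show "(min_defect (collision p) + collision p * min_defect (p\<^sup>2 / collision p)) / 2 \<le> x"
      using defect_square[OF l st p] mult_left_mono[OF _ s(1)] unfolding x by fastforce
  qed
  then show ?thesis by simp
qed

lemma min_defect_nonneg:
  assumes "0 \<le> p" "p \<le> 1"
  shows "0 \<le> min_defect p"
proof (rule nonneg_of_collision_recursion[where C = "3 / ln 2", OF _ _ _ min_defect_collision assms])
  fix x :: real assume x: "0 \<le> x" "x \<le> 1"
  show "- (3 / ln 2 * sqrt x) \<le> min_defect x" using h_le_sqrt[OF x] min_defect_ge[OF x] by linarith
  show "- (3 / ln 2 * sqrt (1 - x)) \<le> min_defect x"
    using h_le_sqrt[of "1 - x"] h_one_minus[of x] min_defect_ge[OF x] x by simp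
qed simp

end

theorem mainTheorem7:
  fixes E :: "nat list \<Rightarrow> mop \<Rightarrow> real" and k :: nat
    and d d' :: "nat list" and \<phi> \<psi> :: mvec and p :: real
  assumes k_pos: "0 < k"
    and additive: "\<And>d1 d2 \<phi>1 \<phi>2. length d1 = k \<Longrightarrow> length d2 = k \<Longrightarrow>
        is_state d1 \<phi>1 \<Longrightarrow> is_state d2 \<phi>2 \<Longrightarrow>
        E (tensor_dims d1 d2) (proj (tensor d1 d2 \<phi>1 \<phi>2)) = E d1 (proj \<phi>1) + E d2 (proj \<phi>2)"
    and monotone: "\<And>d1 d2 T L X f P \<phi>0 \<chi>. length d1 = k \<Longrightarrow> locc d1 d2 T L \<Longrightarrow>
        is_state d1 \<phi>0 \<Longrightarrow> finite (X :: nat set) \<Longrightarrow> f ` T \<subseteq> X \<Longrightarrow>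
        (\<And>x. x \<in> X \<Longrightarrow> is_state d2 (\<chi> x)) \<Longrightarrow>
        (\<And>x i i'. x \<in> X \<Longrightarrow>
            (\<Sum>t\<in>{t\<in>T. f t = x}. L t (proj \<phi>0) i i') = complex_of_real (P x) * proj (\<chi> x) i i') \<Longrightarrow>
        E d1 (proj \<phi>0) \<ge> (\<Sum>x\<in>X. P x * E d2 (proj (\<chi> x)))"
    and ghz_one: "E (replicate k 2) (proj (ghz k)) = 1"
    and "length d = k" and "length d' = k"
    and "is_state d \<phi>" and "is_state d' \<psi>"
    and "0 \<le> p" and "p \<le> 1"
  shows "E (dsum_dims d d') (proj (dsum d d' (complex_of_real (sqrt p)) \<phi> (complex_of_real (sqrt (1 - p))) \<psi>))
           \<ge> p * E d (proj \<phi>) + (1 - p) * E d' (proj \<psi>) + h p"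
proof -
  interpret entanglement_measure E k
    by unfold_locales (fact k_pos additive monotone ghz_one)+
  have "0 \<le> min_defect p" by (rule min_defect_nonneg) (use assms in auto)
  also have "min_defect p \<le> defect p d d' \<phi> \<psi>" by (rule min_defect_le) (use assms in auto)
  finally show ?thesis by (simp add: defect_def)
qed

end
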